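(* Let $R_0^*\in SO(3)$ with unit quaternion representation $w_0^*$, let $2\le k^*\le\ell$, let $(y_i,x_i)$ satisfy $y_i=R_0^*x_i+\epsilon_i$ for $i=1,\dots,k^*$ (noisy inliers, $\epsilon_i\in\mathbb{R}^3$), with $(y_j,x_j)$ arbitrary for $j>k^*$ (outliers), let $c_1^2,\dots,c_\ell^2\ge0$, and let $\hat w_0$ be a global minimizer of (TLS-Q). Define $$\zeta_{\mathrm{in}}:=\frac{\lambda_{\min2}\big(\sum_{i=1}^{k^*}Q_i\big)}{\lambda_{\min}\big(\sum_{i=1}^{k^*}Q_i\big)}.$$ Assume (1) $\zeta_{\mathrm{in}}\ge k^*/(k^*-1)$; (2) $0<c_j^2<\lambda_{\min}(Q_j)$ for every $j=k^*+1,\dots,\ell$; (3) for every $i=1,\dots,k^*$, $$c_i^2>\hat w_0^\top Q_i\hat w_0+\|Q_i\hat w_0\|_2+\frac{|d_i|+d_i}{2},\quad d_i:=\frac{\sum_{k=1}^{k^*}\hat w_0^\top Q_k\hat w_0}{k^*}-\hat w_0^\top Q_i\hat w_0+\frac{\lambda_{\max}\big(\sum_{j\in\{1,\dots,k^*\}\setminus\{i\}}(Q_i-Q_j)\big)}{\zeta_{\mathrm{in}}(k^*-1)}.$$ Then (SDR) is tight, and $$\sin^2(\hat\tau_0^* ):=1-(\hat w_0^\top w_0^* )^2\le\frac{4\sum_{i=1}^{k^*}\|\epsilon_i\|_2\|x_i\|_2}{\lambda_{\min2}\big(\sum_{i=1}^{k^*}P_i\big)}.$$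
   Context: For $w=[w_1;w_2;w_3;w_4]\in\mathbb{S}^3$, $R(w)=\begin{bmatrix} w_1^2+w_2^2-w_3^2-w_4^2 & 2(w_2w_3-w_1w_4) & 2(w_2w_4+w_1w_3)\\ 2(w_2w_3+w_1w_4) & w_1^2+w_3^2-w_2^2-w_4^2 & 2(w_3w_4-w_1w_2)\\ 2(w_2w_4-w_1w_3) & 2(w_3w_4+w_1w_2) & w_1^2+w_4^2-w_2^2-w_3^2\end{bmatrix}\in SO(3)$; $\pm w$ are the unit quaternion representations of $R(w)$. $Q_i$ is the unique symmetric $4\times4$ matrix with $w^\top Q_iw=\|y_i-R(w)x_i\|_2^2$ for all $w\in\mathbb{S}^3$; for inliers, $P_i$ is the unique symmetric $4\times4$ matrix with $w^\top P_iw=\|R_0^*x_i-R(w)x_i\|_2^2$ for all $w\in\mathbb{S}^3$. $\lambda_{\min},\lambda_{\min2},\lambda_{\max}$: smallest, second smallest (with multiplicity), largest eigenvalue. (TLS-Q) is $\min_{w_0\in\mathbb{S}^3}\sum_{i=1}^\ell\min\{w_0^\top Q_iw_0,c_i^2\}$. For $\mathcal{A}\in\mathbb{R}^{4(\ell+1)\times4(\ell+1)}$, $[\mathcal{A}]_{ij}$ ($0\le i,j\le\ell$) is the $4\times4$ block in rows $4i+1..4i+4$, columns $4j+1..4j+4$. $\mathcal{Q}$ is symmetric with $[\mathcal{Q}]_{0i}=[\mathcal{Q}]_{i0}=\frac12(Q_i-c_i^2I_4)$ ($i\ge1$), other blocks zero. (QCQP): minimize $\operatorname{tr}(\mathcal{Q}\omega\omega^\top)+\sum_ic_i^2$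 over $\omega\in\mathbb{R}^{4(\ell+1)}$ s.t. $[\omega\omega^\top]_{0i}=[\omega\omega^\top]_{ii}$ ($i=1..\ell$), $\operatorname{tr}([\omega\omega^\top]_{00})=1$. (SDR): same objective with $\omega\omega^\top$ replaced by symmetric $\mathcal{W}\succeq0$ and the same constraints on $\mathcal{W}$. (SDR) is tight if it admits $\hat\omega\hat\omega^\top$ as a global minimizer, where $\hat\omega$ is a global minimizer of (QCQP). *)

theory Defs
  imports "Jordan_Normal_Form.Matrix" "Jordan_Normal_Form.Char_Poly"
    "HOL-Computational_Algebra.Polynomial"
begin

text \<open>Vectors/matrices are Jordan_Normal_Form vec/mat; quaternions are 4-vectors
  indexed 0..3, i.e. w_1 = w $ 0, ..., w_4 = w $ 3.\<close>

definition vnorm :: "real vec \<Rightarrow> real" where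
  "vnorm v = sqrt (v \<bullet> v)"

definition unit_quat :: "real vec \<Rightarrow> bool" where
  "unit_quat w \<longleftrightarrow> w \<in> carrier_vec 4 \<and> w \<bullet> w = 1"

definition rotR :: "real vec \<Rightarrow> real mat" where
  "rotR w = (let w1 = w $ 0; w2 = w $ 1; w3 = w $ 2; w4 = w $ 3 in
     mat_of_rows_list 3
      [[w1^2 + w2^2 - w3^2 - w4^2, 2*(w2*w3 - w1*w4), 2*(w2*w4 + w1*w3)],
       [2*(w2*w3 + w1*w4), w1^2 + w3^2 - w2^2 - w4^2, 2*(w3*w4 - w1*w2)],
       [2*(w2*w4 - w1*w3), 2*(w3*w4 + w1*w2), w1^2 + w4^2 - w2^2 - w3^2]])"

definition SO3 :: "real mat set" where
  "SO3 = {R. R \<in> carrier_mat 3 3 \<and> transpose_mat R * R = 1\<^sub>m 3 \<and> det R = 1}"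

definition Qmat :: "real vec \<Rightarrow> real vec \<Rightarrow> real mat" where
  "Qmat y x = (THE Q. Q \<in> carrier_mat 4 4 \<and> transpose_mat Q = Q \<and>
      (\<forall>w. unit_quat w \<longrightarrow> w \<bullet> (Q *\<^sub>v w) = (vnorm (y - rotR w *\<^sub>v x))\<^sup>2))"

definition Pmat :: "real mat \<Rightarrow> real vec \<Rightarrow> real mat" where
  "Pmat R0 x = (THE P. P \<in> carrier_mat 4 4 \<and> transpose_mat P = P \<and>
      (\<forall>w. unit_quat w \<longrightarrow> w \<bullet> (P *\<^sub>v w) = (vnorm (R0 *\<^sub>v x - rotR w *\<^sub>v x))\<^sup>2))"

text \<open>Eigenvalues with multiplicity, in increasing order: the roots of the characteristic
  polynomial (for the real symmetric matrices used here all eigenvalues are real).\<close>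
definition eigs :: "real mat \<Rightarrow> real list" where
  "eigs A = sorted_list_of_multiset (proots (char_poly A))"

definition lam_min :: "real mat \<Rightarrow> real" where "lam_min A = eigs A ! 0"
definition lam_min2 :: "real mat \<Rightarrow> real" where "lam_min2 A = eigs A ! 1"
definition lam_max :: "real mat \<Rightarrow> real" where "lam_max A = last (eigs A)"

definition msum4 :: "(nat \<Rightarrow> real mat) \<Rightarrow> nat set \<Rightarrow> real mat" where
  "msum4 f I = mat 4 4 (\<lambda>(a,b). \<Sum>i\<in>I. f i $$ (a,b))"

definition mtrace :: "real mat \<Rightarrow> real" where
  "mtrace A = (\<Sum>i<dim_row A. A $$ (i,i))"

definition outer :: "real vec \<Rightarrow> real mat" where
  "outer v = mat (dim_vec v) (dim_vec v) (\<lambda>(i,j). v $ i * v $ j)"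

definition psd :: "real mat \<Rightarrow> bool" where
  "psd A \<longleftrightarrow> (\<forall>v \<in> carrier_vec (dim_row A). 0 \<le> v \<bullet> (A *\<^sub>v v))"

text \<open>[A]_{ij}: the 4x4 block in rows 4i+1..4i+4, columns 4j+1..4j+4 (0-based here).\<close>
definition blk :: "real mat \<Rightarrow> nat \<Rightarrow> nat \<Rightarrow> real mat" where
  "blk A i j = mat 4 4 (\<lambda>(a,b). A $$ (4*i+a, 4*j+b))"

definition bigQ :: "nat \<Rightarrow> (nat \<Rightarrow> real mat) \<Rightarrow> (nat \<Rightarrow> real) \<Rightarrow> real mat" where
  "bigQ l Q csq = mat (4*(l+1)) (4*(l+1)) (\<lambda>(r,s).
     let i = r div 4; j = s div 4; a = r mod 4; b = s mod 4 in
     if i = 0 \<and> 1 \<le> j then (1/2) * (Q j - csq j \<cdot>\<^sub>m 1\<^sub>m 4) $$ (a,b)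
     else if j = 0 \<and> 1 \<le> i then (1/2) * (Q i - csq i \<cdot>\<^sub>m 1\<^sub>m 4) $$ (a,b)
     else 0)"

definition relax_obj :: "nat \<Rightarrow> (nat \<Rightarrow> real mat) \<Rightarrow> (nat \<Rightarrow> real) \<Rightarrow> real mat \<Rightarrow> real" where
  "relax_obj l Q csq W = mtrace (bigQ l Q csq * W) + (\<Sum>i=1..l. csq i)"

definition relax_constr :: "nat \<Rightarrow> real mat \<Rightarrow> bool" where
  "relax_constr l W \<longleftrightarrow> (\<forall>i\<in>{1..l}. blk W 0 i = blk W i i) \<and> mtrace (blk W 0 0) = 1"

definition qcqp_feasible :: "nat \<Rightarrow> real vec \<Rightarrow> bool" where
  "qcqp_feasible l \<omega> \<longleftrightarrow> \<omega> \<in> carrier_vec (4*(l+1)) \<and> relax_constr l (outer \<omega>)"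

definition qcqp_global_min :: "nat \<Rightarrow> (nat \<Rightarrow> real mat) \<Rightarrow> (nat \<Rightarrow> real) \<Rightarrow> real vec \<Rightarrow> bool" where
  "qcqp_global_min l Q csq \<omega> \<longleftrightarrow> qcqp_feasible l \<omega> \<and>
     (\<forall>\<omega>'. qcqp_feasible l \<omega>' \<longrightarrow> relax_obj l Q csq (outer \<omega>) \<le> relax_obj l Q csq (outer \<omega>'))"

definition sdr_feasible :: "nat \<Rightarrow> real mat \<Rightarrow> bool" where
  "sdr_feasible l W \<longleftrightarrow> W \<in> carrier_mat (4*(l+1)) (4*(l+1)) \<and> transpose_mat W = W \<and> psd W
     \<and> relax_constr l W"

definition sdr_global_min :: "nat \<Rightarrow> (nat \<Rightarrow> real mat) \<Rightarrow> (nat \<Rightarrow> real) \<Rightarrow> real mat \<Rightarrow> bool" where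
  "sdr_global_min l Q csq W \<longleftrightarrow> sdr_feasible l W \<and>
     (\<forall>W'. sdr_feasible l W' \<longrightarrow> relax_obj l Q csq W \<le> relax_obj l Q csq W')"

definition sdr_tight :: "nat \<Rightarrow> (nat \<Rightarrow> real mat) \<Rightarrow> (nat \<Rightarrow> real) \<Rightarrow> bool" where
  "sdr_tight l Q csq \<longleftrightarrow> (\<exists>\<omega>. qcqp_global_min l Q csq \<omega>) \<and>
     (\<forall>\<omega>. qcqp_global_min l Q csq \<omega> \<longrightarrow> sdr_global_min l Q csq (outer \<omega>))"

definition tls_obj :: "nat \<Rightarrow> (nat \<Rightarrow> real mat) \<Rightarrow> (nat \<Rightarrow> real) \<Rightarrow> real vec \<Rightarrow> real" where
  "tls_obj l Q csq w = (\<Sum>i=1..l. min (w \<bullet> (Q i *\<^sub>v w)) (csq i))"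

definition tls_global_min :: "nat \<Rightarrow> (nat \<Rightarrow> real mat) \<Rightarrow> (nat \<Rightarrow> real) \<Rightarrow> real vec \<Rightarrow> bool" where
  "tls_global_min l Q csq w \<longleftrightarrow> unit_quat w \<and>
     (\<forall>w'. unit_quat w' \<longrightarrow> tls_obj l Q csq w \<le> tls_obj l Q csq w')"

end

theory Submission
  imports Defs
begin

lemma scalar_prod_self_nonneg: "0 \<le> (v :: real vec) \<bullet> v"
  using conjugate_square_ge_0_vec[of v] unfolding vec_conjugate_real .

lemma scalar_prod_self_pos_iff:
  "(v :: real vec) \<in> carrier_vec n \<Longrightarrow> 0 < v \<bullet> v \<longleftrightarrow> v \<noteq> 0\<^sub>v n"
  using conjugate_square_greater_0_vec[of v n] by simp

lemma vnorm_nonneg: "0 \<le> vnorm v"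
  using scalar_prod_self_nonneg[of v] by (simp add: vnorm_def)

lemma vnorm_square: "(vnorm v)\<^sup>2 = v \<bullet> v"
  using scalar_prod_self_nonneg[of v] by (simp add: vnorm_def)

lemma sum_mult_indicator: "j < (n::nat) \<Longrightarrow> (\<Sum>i<n. f i * (if i = j then 1 else 0)) = (f j :: real)"
proof -
  have "(\<Sum>i<n. f i * (if i = j then 1 else 0)) = (\<Sum>i<n. if i = j then f i else 0)"
    by (intro sum.cong) auto
  then show "j < n \<Longrightarrow> ?thesis" by simp
qed

lemma scalar_prod_via_sum: "dim_vec y = n \<Longrightarrow> x \<bullet> y = (\<Sum>a<n. x $ a * y $ a)"
  by (simp add: scalar_prod_def lessThan_atLeast0)

lemma mult_mat_vec_via_sum:
  "A \<in> carrier_mat n m \<Longrightarrow> a < n \<Longrightarrow> dim_vec x = m \<Longrightarrow> (A *\<^sub>v x) $ a = (\<Sum>b<m. A $$ (a, b) * x $ b)"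
  by (simp add: scalar_prod_via_sum row_def)

lemma quad_form_via_sum:
  "A \<in> carrier_mat n n \<Longrightarrow> x \<in> carrier_vec n \<Longrightarrow>
    x \<bullet> (A *\<^sub>v x) = (\<Sum>a<n. \<Sum>b<n. x $ a * A $$ (a, b) * x $ b)"
  by (simp add: scalar_prod_via_sum[of _ n] mult_mat_vec_via_sum sum_distrib_left mult_ac)

lemma quad_form_add:
  "A \<in> carrier_mat n n \<Longrightarrow> B \<in> carrier_mat n n \<Longrightarrow> v \<in> carrier_vec n \<Longrightarrow>
    v \<bullet> ((A + B) *\<^sub>v v) = v \<bullet> (A *\<^sub>v v) + v \<bullet> (B *\<^sub>v (v :: real vec))"
  by (simp add: add_mult_distrib_mat_vec scalar_prod_add_distrib[of v n])

lemma quad_form_diff: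
  "A \<in> carrier_mat n n \<Longrightarrow> B \<in> carrier_mat n n \<Longrightarrow> v \<in> carrier_vec n \<Longrightarrow>
    v \<bullet> ((A - B) *\<^sub>v v) = v \<bullet> (A *\<^sub>v v) - v \<bullet> (B *\<^sub>v (v :: real vec))"
  by (simp add: minus_mult_distrib_mat_vec scalar_prod_minus_distrib[of v n])

lemma quad_form_smult:
  "A \<in> carrier_mat n n \<Longrightarrow> v \<in> carrier_vec n \<Longrightarrow>
    v \<bullet> ((c \<cdot>\<^sub>m A) *\<^sub>v v) = c * (v \<bullet> (A *\<^sub>v (v :: real vec)))"
  using quad_form_via_sum[of "c \<cdot>\<^sub>m A" n v] quad_form_via_sum[of A n v]
  by (simp add: sum_distrib_left mult_ac)

lemma quad_form_smult_vec:
  "A \<in> carrier_mat n n \<Longrightarrow> v \<in> carrier_vec n \<Longrightarrow>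
    (c \<cdot>\<^sub>v v) \<bullet> (A *\<^sub>v (c \<cdot>\<^sub>v v)) = c\<^sup>2 * (v \<bullet> (A *\<^sub>v (v :: real vec)))"
  by (simp add: mult_mat_vec power2_eq_square)

lemma scalar_prod_square_le:
  assumes x: "(x :: real vec) \<in> carrier_vec n" and y: "y \<in> carrier_vec n"
  shows "(x \<bullet> y)\<^sup>2 \<le> (x \<bullet> x) * (y \<bullet> y)"
proof (cases "y = 0\<^sub>v n")
  case False
  define v where "v = (y \<bullet> y) \<cdot>\<^sub>v x - (x \<bullet> y) \<cdot>\<^sub>v y"
  have "v \<bullet> v = (y \<bullet> y) * ((x \<bullet> x) * (y \<bullet> y) - (x \<bullet> y)\<^sup>2)"
    using x y unfolding v_def
    by (simp add: minus_scalar_prod_distrib[of _ n] scalar_prod_minus_distrib[of _ n]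
        comm_scalar_prod[of y n x] power2_eq_square algebra_simps)
  moreover have "0 < y \<bullet> y" using False y scalar_prod_self_pos_iff by blast
  ultimately show ?thesis
    using scalar_prod_self_nonneg[of v] by (simp add: zero_le_mult_iff)
qed (use x in simp)

lemma abs_scalar_prod_le_vnorm:
  assumes "(x :: real vec) \<in> carrier_vec n" "y \<in> carrier_vec n"
  shows "\<bar>x \<bullet> y\<bar> \<le> vnorm x * vnorm y"
proof -
  have "\<bar>x \<bullet> y\<bar> = sqrt ((x \<bullet> y)\<^sup>2)" by simp
  also have "\<dots> \<le> sqrt ((x \<bullet> x) * (y \<bullet> y))"
    using scalar_prod_square_le[OF assms] real_sqrt_le_mono by blast
  finally show ?thesis by (simp add: vnorm_def real_sqrt_mult)
qed

lemma vnorm_diff_le: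
  assumes "(a :: real vec) \<in> carrier_vec n" "b \<in> carrier_vec n"
  shows "vnorm (a - b) \<le> vnorm a + vnorm b"
proof -
  have "(a - b) \<bullet> (a - b) = a \<bullet> a - 2 * (a \<bullet> b) + b \<bullet> b"
    using assms by (simp add: minus_scalar_prod_distrib[of _ n] scalar_prod_minus_distrib[of _ n]
        comm_scalar_prod[of b n a])
  also have "\<dots> \<le> (vnorm a + vnorm b)\<^sup>2"
    using abs_scalar_prod_le_vnorm[OF assms] vnorm_square[of a] vnorm_square[of b]
    by (simp add: power2_sum)
  finally have "(vnorm (a - b))\<^sup>2 \<le> (vnorm a + vnorm b)\<^sup>2" by (simp only: vnorm_square)
  then show ?thesis
    by (rule power2_le_imp_le) (simp add: vnorm_nonneg)
qed

definition vnormalize :: "real vec \<Rightarrow> real vec" where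
  "vnormalize v = (1 / vnorm v) \<cdot>\<^sub>v v"

lemma vnormalize_unit:
  assumes "v \<in> carrier_vec n" "v \<noteq> 0\<^sub>v n"
  shows "vnormalize v \<bullet> vnormalize v = 1"
proof -
  have "0 < v \<bullet> v" using assms scalar_prod_self_pos_iff by blast
  then show ?thesis
    using assms(1) by (simp add: vnormalize_def vnorm_def)
qed

subsection \<open>Symmetric matrices\<close>

definition sym_mat :: "nat \<Rightarrow> real mat \<Rightarrow> bool" where
  "sym_mat n A \<longleftrightarrow> A \<in> carrier_mat n n \<and> transpose_mat A = A"

lemma sym_mat_carrier: "sym_mat n A \<Longrightarrow> A \<in> carrier_mat n n"
  by (simp add: sym_mat_def)

lemma sym_mat_entry: "sym_mat n A \<Longrightarrow> i < n \<Longrightarrow> j < n \<Longrightarrow> A $$ (i, j) = A $$ (j, i)"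
  unfolding sym_mat_def by (metis carrier_matD index_transpose_mat(1))

lemma sym_matI:
  "A \<in> carrier_mat n n \<Longrightarrow> (\<And>i j. i < n \<Longrightarrow> j < n \<Longrightarrow> A $$ (i, j) = A $$ (j, i)) \<Longrightarrow> sym_mat n A"
  unfolding sym_mat_def by auto

lemma sym_mat_bilinear_comm:
  assumes A: "sym_mat n A" and x: "x \<in> carrier_vec n" and y: "y \<in> carrier_vec n"
  shows "x \<bullet> (A *\<^sub>v y) = y \<bullet> (A *\<^sub>v x)"
proof -
  have Ax: "A *\<^sub>v x \<in> carrier_vec n" using sym_mat_carrier[OF A] x by simp
  have "x \<bullet> (A *\<^sub>v y) = (transpose_mat A *\<^sub>v x) \<bullet> y"
    using transpose_vec_mult_scalar[OF sym_mat_carrier[OF A] y x] by simp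
  also have "\<dots> = y \<bullet> (A *\<^sub>v x)"
    using A comm_scalar_prod[OF Ax y] by (simp add: sym_mat_def)
  finally show ?thesis .
qed

lemma sym_quad_form_add_vec:
  assumes A: "sym_mat n A" and x: "x \<in> carrier_vec n" and y: "y \<in> carrier_vec n"
  shows "(x + y) \<bullet> (A *\<^sub>v (x + y)) = x \<bullet> (A *\<^sub>v x) + 2 * (x \<bullet> (A *\<^sub>v y)) + y \<bullet> (A *\<^sub>v y)"
proof -
  have "A *\<^sub>v (x + y) = A *\<^sub>v x + A *\<^sub>v y"
    using sym_mat_carrier[OF A] x y by (simp add: mult_add_distrib_mat_vec)
  then show ?thesis
    using sym_mat_bilinear_comm[OF A y x] sym_mat_carrier[OF A] x y
    by (simp add: add_scalar_prod_distrib[of _ n] scalar_prod_add_distrib[of _ n])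
qed

lemma sym_mat_add:
  assumes "sym_mat n A" "sym_mat n B" shows "sym_mat n (A + B)"
  using assms sym_mat_carrier[OF assms(2)] by (auto intro!: sym_matI simp: sym_mat_entry)

lemma sym_mat_minus:
  assumes "sym_mat n A" "sym_mat n B" shows "sym_mat n (A - B)"
  using assms sym_mat_carrier[OF assms(1)] sym_mat_carrier[OF assms(2)]
  by (auto intro!: sym_matI simp: sym_mat_entry)

lemma sym_mat_smult: "sym_mat n A \<Longrightarrow> sym_mat n (c \<cdot>\<^sub>m A)"
  by (frule sym_mat_carrier) (auto intro!: sym_matI simp: sym_mat_entry)

lemma sym_mat_one: "sym_mat n (1\<^sub>m n)"
  by (auto intro!: sym_matI)

lemma vnormalize_scale:
  "v \<in> carrier_vec n \<Longrightarrow> v \<noteq> 0\<^sub>v n \<Longrightarrow> vnorm v \<cdot>\<^sub>v vnormalize v = v"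
  using scalar_prod_self_pos_iff[of v n] by (simp add: vnormalize_def vnorm_def smult_smult_assoc)

lemma sym_mat_eq_if_unit_quad_forms_eq:
  assumes A: "sym_mat n A" and B: "sym_mat n B"
    and eq: "\<And>w. w \<in> carrier_vec n \<Longrightarrow> w \<bullet> w = 1 \<Longrightarrow> w \<bullet> (A *\<^sub>v w) = w \<bullet> (B *\<^sub>v w)"
  shows "A = B"
proof -
  define D where "D = A - B"
  have D: "sym_mat n D" unfolding D_def by (rule sym_mat_minus[OF A B])
  have Dc: "D \<in> carrier_mat n n" by (rule sym_mat_carrier[OF D])
  have unit: "w \<bullet> (D *\<^sub>v w) = 0" if "w \<in> carrier_vec n" "w \<bullet> w = 1" for w
    using eq[OF that] quad_form_diff[OF sym_mat_carrier[OF A] sym_mat_carrier[OF B] that(1)]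
    by (simp add: D_def)
  have zero: "w \<bullet> (D *\<^sub>v w) = 0" if w: "w \<in> carrier_vec n" for w
  proof (cases "w = 0\<^sub>v n")
    case False
    have "vnormalize w \<in> carrier_vec n" using w by (simp add: vnormalize_def)
    then have "vnormalize w \<bullet> (D *\<^sub>v vnormalize w) = 0"
      using unit vnormalize_unit[OF w False] by blast
    then show ?thesis
      using quad_form_smult_vec[OF Dc, of "vnormalize w" "vnorm w"] vnormalize_scale[OF w False] w
      by (simp add: vnormalize_def)
  qed (use Dc in simp)
  have bilinear: "x \<bullet> (D *\<^sub>v y) = 0" if "x \<in> carrier_vec n" "y \<in> carrier_vec n" for x y
    using sym_quad_form_add_vec[OF D that] zero that by simp
  have "D $$ (a, b) = 0" if "a < n" "b < n" for a b
    using bilinear[of "unit_vec n a" "unit_vec n b"] that Dc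
    by (simp add: row_def)
  then show ?thesis
    using sym_mat_carrier[OF A] sym_mat_carrier[OF B] by (auto simp: D_def)
qed

definition orth_proj :: "real vec \<Rightarrow> real vec \<Rightarrow> real vec" where
  "orth_proj w v = v - (w \<bullet> v) \<cdot>\<^sub>v w"

definition orth_proj_mat :: "nat \<Rightarrow> real vec \<Rightarrow> real mat" where
  "orth_proj_mat n w = 1\<^sub>m n - outer w"

lemma orth_proj_carrier: "w \<in> carrier_vec n \<Longrightarrow> v \<in> carrier_vec n \<Longrightarrow> orth_proj w v \<in> carrier_vec n"
  by (simp add: orth_proj_def)

lemma orth_proj_orthogonal:
  "w \<in> carrier_vec n \<Longrightarrow> w \<bullet> w = 1 \<Longrightarrow> v \<in> carrier_vec n \<Longrightarrow> orth_proj w v \<bullet> w = 0"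
  by (simp add: orth_proj_def minus_scalar_prod_distrib[of _ n] comm_scalar_prod[of v n w])

lemma orth_proj_decomp:
  "w \<in> carrier_vec n \<Longrightarrow> v \<in> carrier_vec n \<Longrightarrow> v = orth_proj w v + (w \<bullet> v) \<cdot>\<^sub>v w"
  by (auto simp: orth_proj_def)

lemma quad_form_orth_proj_decomp:
  assumes A: "sym_mat n A" and w: "w \<in> carrier_vec n" and v: "v \<in> carrier_vec n"
  shows "v \<bullet> (A *\<^sub>v v) = orth_proj w v \<bullet> (A *\<^sub>v orth_proj w v)
    + 2 * (w \<bullet> v) * (orth_proj w v \<bullet> (A *\<^sub>v w)) + (w \<bullet> v)\<^sup>2 * (w \<bullet> (A *\<^sub>v w))"
proof -
  have Ac: "A \<in> carrier_mat n n" by (rule sym_mat_carrier[OF A])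
  have "v \<bullet> (A *\<^sub>v v) = (orth_proj w v + (w \<bullet> v) \<cdot>\<^sub>v w) \<bullet> (A *\<^sub>v (orth_proj w v + (w \<bullet> v) \<cdot>\<^sub>v w))"
    using orth_proj_decomp[OF w v] by simp
  also have "\<dots> = orth_proj w v \<bullet> (A *\<^sub>v orth_proj w v)
    + 2 * (orth_proj w v \<bullet> (A *\<^sub>v ((w \<bullet> v) \<cdot>\<^sub>v w))) + ((w \<bullet> v) \<cdot>\<^sub>v w) \<bullet> (A *\<^sub>v ((w \<bullet> v) \<cdot>\<^sub>v w))"
    using orth_proj_carrier[OF w v] w by (intro sym_quad_form_add_vec[OF A]) simp_all
  finally show ?thesis
    using orth_proj_carrier[OF w v] w Ac quad_form_smult_vec[OF Ac w]
    by (simp add: mult_mat_vec[OF Ac w])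
qed

lemma scalar_prod_orth_proj_decomp:
  assumes w: "w \<in> carrier_vec n" "w \<bullet> w = 1" and v: "v \<in> carrier_vec n"
  shows "v \<bullet> v = orth_proj w v \<bullet> orth_proj w v + (w \<bullet> v)\<^sup>2"
  using quad_form_orth_proj_decomp[OF sym_mat_one w(1) v] orth_proj_carrier[OF w(1) v]
    orth_proj_orthogonal[OF w v] w v by simp

lemma outer_carrier: "outer v \<in> carrier_mat (dim_vec v) (dim_vec v)"
  by (simp add: outer_def)

lemma outer_mult_vec: "v \<in> carrier_vec (dim_vec w) \<Longrightarrow> outer w *\<^sub>v v = (w \<bullet> v) \<cdot>\<^sub>v w"
  by (rule eq_vecI) (auto simp: outer_def mult_mat_vec_def scalar_prod_def row_def sum_distrib_left mult_ac)

lemma orth_proj_mat_mult_vec: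
  assumes "w \<in> carrier_vec n" "v \<in> carrier_vec n"
  shows "orth_proj_mat n w *\<^sub>v v = orth_proj w v"
proof -
  have "orth_proj_mat n w *\<^sub>v v = 1\<^sub>m n *\<^sub>v v - outer w *\<^sub>v v"
    unfolding orth_proj_mat_def using assms outer_carrier[of w]
    by (intro minus_mult_distrib_mat_vec) auto
  then show ?thesis using assms outer_mult_vec[of v w] by (simp add: orth_proj_def)
qed

lemma sym_mat_orth_proj_mat: "w \<in> carrier_vec n \<Longrightarrow> sym_mat n (orth_proj_mat n w)"
  by (auto intro!: sym_matI simp: orth_proj_mat_def outer_def)

lemma sym_mat_orth_proj_sandwich:
  assumes w: "w \<in> carrier_vec n" and G: "sym_mat n G"
  shows "sym_mat n (orth_proj_mat n w * G * orth_proj_mat n w)"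
proof -
  have P: "orth_proj_mat n w \<in> carrier_mat n n" "transpose_mat (orth_proj_mat n w) = orth_proj_mat n w"
    using sym_mat_orth_proj_mat[OF w] by (auto simp: sym_mat_def)
  have Gc: "G \<in> carrier_mat n n" "transpose_mat G = G" using G by (auto simp: sym_mat_def)
  show ?thesis
    unfolding sym_mat_def using P Gc
    by (simp add: transpose_mult[of _ n n _ n] assoc_mult_mat[of _ n n _ n _ n])
qed

lemma quad_form_orth_proj_sandwich:
  assumes w: "w \<in> carrier_vec n" and G: "sym_mat n G" and v: "v \<in> carrier_vec n"
  shows "v \<bullet> ((orth_proj_mat n w * G * orth_proj_mat n w) *\<^sub>v v) = orth_proj w v \<bullet> (G *\<^sub>v orth_proj w v)"
proof -
  have P: "sym_mat n (orth_proj_mat n w)" by (rule sym_mat_orth_proj_mat[OF w])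
  have Pc: "orth_proj_mat n w \<in> carrier_mat n n" by (rule sym_mat_carrier[OF P])
  have Gc: "G \<in> carrier_mat n n" by (rule sym_mat_carrier[OF G])
  have u: "orth_proj w v \<in> carrier_vec n" by (rule orth_proj_carrier[OF w v])
  have "v \<bullet> ((orth_proj_mat n w * G * orth_proj_mat n w) *\<^sub>v v) = v \<bullet> (orth_proj_mat n w *\<^sub>v (G *\<^sub>v orth_proj w v))"
    using Pc Gc v orth_proj_mat_mult_vec[OF w v] by (simp add: assoc_mult_mat_vec[of _ n n _ n])
  also have "\<dots> = (G *\<^sub>v orth_proj w v) \<bullet> orth_proj w v"
    using sym_mat_bilinear_comm[OF P v, of "G *\<^sub>v orth_proj w v"] Gc u orth_proj_mat_mult_vec[OF w v] by simp
  also have "\<dots> = orth_proj w v \<bullet> (G *\<^sub>v orth_proj w v)"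
    using Gc u by (simp add: comm_scalar_prod[of _ n])
  finally show ?thesis .
qed

definition orthonormal :: "nat \<Rightarrow> (nat \<Rightarrow> real vec) \<Rightarrow> nat \<Rightarrow> bool" where
  "orthonormal n u k \<longleftrightarrow> (\<forall>i<k. u i \<in> carrier_vec n) \<and>
     (\<forall>i<k. \<forall>j<k. u i \<bullet> u j = (if i = j then 1 else 0))"

lemma orthonormalD:
  assumes "orthonormal n u k"
  shows orthonormal_carrier: "i < k \<Longrightarrow> u i \<in> carrier_vec n"
    and orthonormal_scalar_prod: "i < k \<Longrightarrow> j < k \<Longrightarrow> u i \<bullet> u j = (if i = j then 1 else 0)"
  using assms unfolding orthonormal_def by auto

definition lin_comb :: "nat \<Rightarrow> nat \<Rightarrow> (nat \<Rightarrow> real) \<Rightarrow> (nat \<Rightarrow> real vec) \<Rightarrow> real vec" where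
  "lin_comb n k c u = vec n (\<lambda>a. \<Sum>i<k. c i * u i $ a)"

lemma lin_comb_carrier [simp]: "lin_comb n k c u \<in> carrier_vec n"
  by (simp add: lin_comb_def)

lemma scalar_prod_lin_comb:
  assumes y: "y \<in> carrier_vec n" and u: "\<And>i. i < k \<Longrightarrow> u i \<in> carrier_vec n"
  shows "y \<bullet> lin_comb n k c u = (\<Sum>i<k. c i * (y \<bullet> u i))"
proof -
  have "y \<bullet> lin_comb n k c u = (\<Sum>a<n. \<Sum>i<k. c i * (y $ a * u i $ a))"
    by (simp add: lin_comb_def scalar_prod_via_sum[of _ n] sum_distrib_left mult_ac)
  also have "\<dots> = (\<Sum>i<k. c i * (y \<bullet> u i))"
    using u by (subst sum.swap) (simp add: scalar_prod_via_sum[of _ n] sum_distrib_left)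
  finally show ?thesis .
qed

lemma orthonormal_lin_comb_coeff:
  assumes u: "orthonormal n u k" and j: "j < k"
  shows "u j \<bullet> lin_comb n k c u = c j"
proof -
  have "u j \<bullet> lin_comb n k c u = (\<Sum>i<k. c i * (if j = i then 1 else 0))"
    using scalar_prod_lin_comb[OF orthonormal_carrier[OF u j] orthonormal_carrier[OF u]]
      orthonormal_scalar_prod[OF u j] by simp
  also have "\<dots> = c j" using sum_mult_indicator[OF j, of c] by (simp add: eq_commute[of j])
  finally show ?thesis .
qed

lemma orthonormal_exists_orthogonal_unit:
  assumes u: "orthonormal n u k" and k: "k < n"
  shows "\<exists>z \<in> carrier_vec n. z \<bullet> z = 1 \<and> (\<forall>j<k. u j \<bullet> z = 0)"
proof -
  note uc = orthonormal_carrier[OF u]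
  define r where "r i = unit_vec n i - lin_comb n k (\<lambda>j. u j $ i) u" for i
  have rc: "r i \<in> carrier_vec n" for i by (simp add: r_def)
  have r_orth: "u j \<bullet> r i = 0" if j: "j < k" and i: "i < n" for i j
    using uc[OF j] i orthonormal_lin_comb_coeff[OF u j]
    by (simp add: r_def scalar_prod_minus_distrib[of _ n])
  have "\<exists>i<n. r i \<noteq> 0\<^sub>v n"
  proof (rule ccontr)
    assume "\<not> (\<exists>i<n. r i \<noteq> 0\<^sub>v n)"
    then have "r i $ i = 0" if "i < n" for i using that by auto
    then have diag: "(\<Sum>j<k. u j $ i * u j $ i) = 1" if "i < n" for i
      using that by (simp add: r_def lin_comb_def)
    have "real n = (\<Sum>i<n. \<Sum>j<k. u j $ i * u j $ i)" by (simp add: diag)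
    also have "\<dots> = (\<Sum>j<k. u j \<bullet> u j)"
      using uc by (subst sum.swap) (simp add: scalar_prod_via_sum[of _ n])
    also have "\<dots> = real k" using orthonormal_scalar_prod[OF u] by simp
    finally show False using k by simp
  qed
  then obtain i where i: "i < n" "r i \<noteq> 0\<^sub>v n" by blast
  show ?thesis
  proof (intro bexI conjI allI impI)
    show "vnormalize (r i) \<bullet> vnormalize (r i) = 1" by (rule vnormalize_unit[OF rc i(2)])
    show "u j \<bullet> vnormalize (r i) = 0" if "j < k" for j
      using r_orth[OF that i(1)] uc[OF that] rc by (simp add: vnormalize_def)
  qed (simp add: vnormalize_def rc)
qed

lemma orthonormal_extend:
  assumes "orthonormal n u k" and "k \<le> n"
  shows "\<exists>w. orthonormal n w n \<and> (\<forall>j<k. w j = u j)"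
  using assms
proof (induction "n - k" arbitrary: k u)
  case 0
  then show ?case by auto
next
  case (Suc m)
  have "k < n" using Suc.hyps(2) by simp
  then obtain z where z: "z \<in> carrier_vec n" "z \<bullet> z = 1" "\<forall>j<k. u j \<bullet> z = 0"
    using orthonormal_exists_orthogonal_unit[OF Suc.prems(1)] by blast
  have "orthonormal n (u(k := z)) (Suc k)"
    using Suc.prems(1) z unfolding orthonormal_def
    by (auto simp: less_Suc_eq comm_scalar_prod[of _ n])
  moreover have "m = n - Suc k" "Suc k \<le> n" using Suc.hyps(2) by simp_all
  ultimately obtain w where "orthonormal n w n" "\<forall>j<Suc k. w j = (u(k := z)) j"
    using Suc.hyps(1) by blast
  then show ?case by auto
qed

lemma orthonormal_completeness:
  assumes u: "orthonormal n u n" and a: "a < n" and b: "b < n"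
  shows "(\<Sum>j<n. u j $ a * u j $ b) = (if a = b then 1 else 0)"
proof -
  define U where "U = mat n n (\<lambda>(i, a). u i $ a)"
  have U: "U \<in> carrier_mat n n" "transpose_mat U \<in> carrier_mat n n" by (auto simp: U_def)
  have "U * transpose_mat U = 1\<^sub>m n"
  proof (rule eq_matI)
    fix i j assume ij: "i < dim_row (1\<^sub>m n)" "j < dim_col (1\<^sub>m n)"
    then have "(U * transpose_mat U) $$ (i, j) = u i \<bullet> u j"
      using orthonormal_carrier[OF u] by (simp add: U_def scalar_prod_via_sum[of _ n] row_def col_def)
    then show "(U * transpose_mat U) $$ (i, j) = 1\<^sub>m n $$ (i, j)"
      using orthonormal_scalar_prod[OF u] ij by simp
  qed (use U in auto)
  then have "transpose_mat U * U = 1\<^sub>m n" using mat_mult_left_right_inverse U by blast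
  then have "(transpose_mat U * U) $$ (a, b) = 1\<^sub>m n $$ (a, b)" by simp
  then show ?thesis using a b U by (simp add: U_def scalar_prod_via_sum[of _ n] row_def col_def)
qed

lemma orthonormal_expansion:
  assumes u: "orthonormal n u n" and x: "x \<in> carrier_vec n"
  shows "x = lin_comb n n (\<lambda>j. u j \<bullet> x) u"
proof (rule eq_vecI)
  fix a assume "a < dim_vec (lin_comb n n (\<lambda>j. u j \<bullet> x) u)"
  then have a: "a < n" by (simp add: lin_comb_def)
  have "lin_comb n n (\<lambda>j. u j \<bullet> x) u $ a = (\<Sum>j<n. \<Sum>b<n. x $ b * (u j $ b * u j $ a))"
    using a x by (simp add: lin_comb_def scalar_prod_via_sum[of _ n] sum_distrib_left sum_distrib_right mult_ac)
  also have "\<dots> = (\<Sum>b<n. x $ b * (if b = a then 1 else 0))"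
    by (subst sum.swap) (simp add: sum_distrib_left[symmetric] orthonormal_completeness[OF u _ a])
  also have "\<dots> = x $ a" by (rule sum_mult_indicator[OF a])
  finally show "x $ a = lin_comb n n (\<lambda>j. u j \<bullet> x) u $ a" ..
qed (use x in \<open>simp add: lin_comb_def\<close>)

lemma orthonormal_eqI:
  assumes u: "orthonormal n u n" and "x \<in> carrier_vec n" "y \<in> carrier_vec n"
    and "\<And>j. j < n \<Longrightarrow> u j \<bullet> x = u j \<bullet> y"
  shows "x = y"
proof -
  have "lin_comb n n (\<lambda>j. u j \<bullet> x) u = lin_comb n n (\<lambda>j. u j \<bullet> y) u"
    using assms(4) by (auto simp: lin_comb_def intro!: sum.cong)
  then show ?thesis using orthonormal_expansion[OF u] assms(2,3) by metis
qed

lemma orthonormal_parseval: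
  assumes u: "orthonormal n u n" and x: "x \<in> carrier_vec n" and y: "y \<in> carrier_vec n"
  shows "x \<bullet> y = (\<Sum>j<n. (u j \<bullet> x) * (u j \<bullet> y))"
proof -
  have "x \<bullet> y = x \<bullet> lin_comb n n (\<lambda>j. u j \<bullet> y) u"
    using orthonormal_expansion[OF u y] by simp
  also have "\<dots> = (\<Sum>j<n. (u j \<bullet> y) * (x \<bullet> u j))"
    by (rule scalar_prod_lin_comb[OF x orthonormal_carrier[OF u]])
  finally show ?thesis
    using x orthonormal_carrier[OF u] by (simp add: comm_scalar_prod[of x n] mult.commute)
qed

subsection \<open>The spectral theorem for real symmetric matrices\<close>

lemma complexified_eigenvector_re_im:
  fixes A :: "real mat" and v :: "complex vec"
  assumes A: "A \<in> carrier_mat n n" and v: "v \<in> carrier_vec n"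
    and eig: "map_mat complex_of_real A *\<^sub>v v = a \<cdot>\<^sub>v v"
  shows "A *\<^sub>v map_vec Re v = Re a \<cdot>\<^sub>v map_vec Re v - Im a \<cdot>\<^sub>v map_vec Im v"
    and "A *\<^sub>v map_vec Im v = Im a \<cdot>\<^sub>v map_vec Re v + Re a \<cdot>\<^sub>v map_vec Im v"
proof -
  have row: "(\<Sum>b<n. complex_of_real (A $$ (i, b)) * v $ b) = a * v $ i" if i: "i < n" for i
  proof -
    have "(map_mat complex_of_real A *\<^sub>v v) $ i = (\<Sum>b<n. map_mat complex_of_real A $$ (i, b) * v $ b)"
      by (rule mult_mat_vec_via_sum) (use A v i in auto)
    then show ?thesis using eig A v i by simp
  qed
  have comp: "(A *\<^sub>v map_vec f v) $ i = (\<Sum>b<n. A $$ (i, b) * f (v $ b))" if i: "i < n" for f i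
  proof -
    have "(A *\<^sub>v map_vec f v) $ i = (\<Sum>b<n. A $$ (i, b) * map_vec f v $ b)"
      by (rule mult_mat_vec_via_sum) (use A v i in auto)
    then show ?thesis using v by simp
  qed
  show "A *\<^sub>v map_vec Re v = Re a \<cdot>\<^sub>v map_vec Re v - Im a \<cdot>\<^sub>v map_vec Im v"
  proof (rule eq_vecI)
    fix i assume "i < dim_vec (Re a \<cdot>\<^sub>v map_vec Re v - Im a \<cdot>\<^sub>v map_vec Im v)"
    then have i: "i < n" using v by simp
    show "(A *\<^sub>v map_vec Re v) $ i = (Re a \<cdot>\<^sub>v map_vec Re v - Im a \<cdot>\<^sub>v map_vec Im v) $ i"
      using comp[OF i] arg_cong[OF row[OF i], of Re] i v by simp
  qed (use A v in simp)
  show "A *\<^sub>v map_vec Im v = Im a \<cdot>\<^sub>v map_vec Re v + Re a \<cdot>\<^sub>v map_vec Im v"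
  proof (rule eq_vecI)
    fix i assume "i < dim_vec (Im a \<cdot>\<^sub>v map_vec Re v + Re a \<cdot>\<^sub>v map_vec Im v)"
    then have i: "i < n" using v by simp
    show "(A *\<^sub>v map_vec Im v) $ i = (Im a \<cdot>\<^sub>v map_vec Re v + Re a \<cdot>\<^sub>v map_vec Im v) $ i"
      using comp[OF i] arg_cong[OF row[OF i], of Im] i v by simp
  qed (use A v in simp)
qed

lemma sym_mat_no_rotation_pair:
  assumes A: "sym_mat n A" and p: "p \<in> carrier_vec n" and q: "q \<in> carrier_vec n"
    and pq: "p \<noteq> 0\<^sub>v n \<or> q \<noteq> 0\<^sub>v n"
    and Ap: "A *\<^sub>v p = r \<cdot>\<^sub>v p - t \<cdot>\<^sub>v q" and Aq: "A *\<^sub>v q = t \<cdot>\<^sub>v p + r \<cdot>\<^sub>v q"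
  shows "t = 0"
proof -
  have "q \<bullet> (A *\<^sub>v p) = p \<bullet> (A *\<^sub>v q)" by (rule sym_mat_bilinear_comm[OF A q p])
  then have "t * (p \<bullet> p + q \<bullet> q) = 0"
    unfolding Ap Aq using p q
    by (simp add: scalar_prod_minus_distrib[of _ n] scalar_prod_add_distrib[of _ n]
        comm_scalar_prod[of p n q] algebra_simps)
  moreover have "0 < p \<bullet> p + q \<bullet> q"
    using pq p q scalar_prod_self_pos_iff scalar_prod_self_nonneg
    by (metis add_nonneg_pos add_pos_nonneg)
  ultimately show ?thesis by simp
qed

lemma sym_mat_has_eigenvector:
  assumes A: "sym_mat n A" and n: "0 < n"
  shows "\<exists>v \<mu>. v \<in> carrier_vec n \<and> v \<noteq> 0\<^sub>v n \<and> A *\<^sub>v v = \<mu> \<cdot>\<^sub>v v"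
proof -
  define Ac where "Ac = map_mat complex_of_real A"
  have Ac: "Ac \<in> carrier_mat n n" using sym_mat_carrier[OF A] by (simp add: Ac_def)
  obtain as where cp: "char_poly Ac = (\<Prod>a\<leftarrow>as. [:- a, 1:])" and len: "length as = n"
    using char_poly_factorized[OF Ac] by blast
  obtain a where "a \<in> set as" using len n by (cases as) auto
  then have "poly (char_poly Ac) a = 0" unfolding cp by (simp add: poly_prod_list)
  then have "eigenvalue Ac a" using eigenvalue_root_char_poly[OF Ac] by simp
  then obtain v where "eigenvector Ac v a" unfolding eigenvalue_def by blast
  then have v: "v \<in> carrier_vec n" "v \<noteq> 0\<^sub>v n" "Ac *\<^sub>v v = a \<cdot>\<^sub>v v"
    using Ac unfolding eigenvector_def by auto
  define p q where "p = map_vec Re v" and "q = map_vec Im v"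
  have pq: "p \<in> carrier_vec n" "q \<in> carrier_vec n" using v(1) by (auto simp: p_def q_def)
  have pq0: "p \<noteq> 0\<^sub>v n \<or> q \<noteq> 0\<^sub>v n"
  proof (rule ccontr)
    assume "\<not> ?thesis"
    then have "p $ i = 0 \<and> q $ i = 0" if "i < n" for i using that by auto
    then have "v $ i = 0" if "i < n" for i using that v(1) by (simp add: p_def q_def complex_eq_iff)
    then show False using v(1,2) by (auto simp: vec_eq_iff)
  qed
  note Ap = complexified_eigenvector_re_im(1)[OF sym_mat_carrier[OF A] v(1) v(3)[unfolded Ac_def], folded p_def q_def]
  note Aq = complexified_eigenvector_re_im(2)[OF sym_mat_carrier[OF A] v(1) v(3)[unfolded Ac_def], folded p_def q_def]
  have "Im a = 0" by (rule sym_mat_no_rotation_pair[OF A pq pq0 Ap Aq])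
  then have "A *\<^sub>v p = Re a \<cdot>\<^sub>v p" "A *\<^sub>v q = Re a \<cdot>\<^sub>v q"
    using Ap Aq pq by auto
  then show ?thesis using pq pq0 by blast
qed

lemma sym_mat_eigenvector_orthogonal:
  assumes A: "sym_mat n A" and w: "orthonormal n w n" and k: "k < n"
    and eig: "\<And>j. j < k \<Longrightarrow> A *\<^sub>v w j = d j \<cdot>\<^sub>v w j"
  shows "\<exists>z \<mu>. z \<in> carrier_vec n \<and> z \<noteq> 0\<^sub>v n \<and> (\<forall>j<k. w j \<bullet> z = 0) \<and> A *\<^sub>v z = \<mu> \<cdot>\<^sub>v z"
proof -
  note wc = orthonormal_carrier[OF w]
  define m where "m = n - k"
  define w' where "w' p = w (k + p)" for p
  have w': "orthonormal n w' m"
    using w unfolding orthonormal_def w'_def m_def by auto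
  define B where "B = mat m m (\<lambda>(p, q). w' p \<bullet> (A *\<^sub>v w' q))"
  have "sym_mat m B"
    using sym_mat_bilinear_comm[OF A] orthonormal_carrier[OF w'] by (auto intro!: sym_matI simp: B_def)
  moreover have "0 < m" using k by (simp add: m_def)
  ultimately obtain y \<mu> where y: "y \<in> carrier_vec m" "y \<noteq> 0\<^sub>v m" "B *\<^sub>v y = \<mu> \<cdot>\<^sub>v y"
    using sym_mat_has_eigenvector by blast
  define z where "z = lin_comb n m (($) y) w'"
  have zc: "z \<in> carrier_vec n" by (simp add: z_def)
  have z_high: "w' q \<bullet> z = y $ q" if "q < m" for q
    unfolding z_def by (rule orthonormal_lin_comb_coeff[OF w' that])
  have z_low: "w j \<bullet> z = 0" if j: "j < k" for j
  proof -
    have "w j \<bullet> z = (\<Sum>p<m. y $ p * (w j \<bullet> w' p))"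
      unfolding z_def by (rule scalar_prod_lin_comb[OF wc orthonormal_carrier[OF w']]) (use j k in simp)
    also have "\<dots> = 0"
      using j k orthonormal_scalar_prod[OF w] by (auto simp: w'_def m_def intro!: sum.neutral)
    finally show ?thesis .
  qed
  have "z \<noteq> 0\<^sub>v n"
  proof
    assume "z = 0\<^sub>v n"
    then have "y $ q = 0" if "q < m" for q
      using z_high[OF that] orthonormal_carrier[OF w' that] by simp
    then show False using y(1,2) by (auto simp: vec_eq_iff)
  qed
  moreover have "A *\<^sub>v z = \<mu> \<cdot>\<^sub>v z"
  proof (rule orthonormal_eqI[OF w])
    fix j assume j: "j < n"
    have "w j \<bullet> (A *\<^sub>v z) = z \<bullet> (A *\<^sub>v w j)"
      by (rule sym_mat_bilinear_comm[OF A wc[OF j]]) (simp add: z_def)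
    also have "\<dots> = w j \<bullet> (\<mu> \<cdot>\<^sub>v z)"
    proof (cases "j < k")
      case True
      then show ?thesis using z_low[OF True] wc[OF j] eig[OF True] comm_scalar_prod[OF zc wc[OF j]] zc
        by simp
    next
      case False
      then obtain q where q: "q < m" and jq: "j = k + q" using j by (metis add_diff_inverse_nat diff_less_mono m_def not_less)
      have Aw: "A *\<^sub>v w' q \<in> carrier_vec n"
        using sym_mat_carrier[OF A] orthonormal_carrier[OF w' q] by simp
      have "z \<bullet> (A *\<^sub>v w' q) = (\<Sum>p<m. y $ p * ((A *\<^sub>v w' q) \<bullet> w' p))"
        using comm_scalar_prod[OF _ Aw, of z] scalar_prod_lin_comb[OF Aw orthonormal_carrier[OF w']]
        by (simp add: z_def)
      also have "\<dots> = (\<Sum>p<m. B $$ (q, p) * y $ p)"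
        using q Aw orthonormal_carrier[OF w'] sym_mat_bilinear_comm[OF A]
        by (intro sum.cong refl) (simp add: B_def comm_scalar_prod[of _ n "w' _"])
      also have "\<dots> = (B *\<^sub>v y) $ q"
        by (rule mult_mat_vec_via_sum[symmetric]) (use q y(1) in \<open>auto simp: B_def\<close>)
      also have "\<dots> = \<mu> * (w' q \<bullet> z)" using y(3) q y(1) z_high[OF q] by simp
      finally show ?thesis using jq wc[OF j] by (simp add: w'_def z_def)
    qed
    finally show "w j \<bullet> (A *\<^sub>v z) = w j \<bullet> (\<mu> \<cdot>\<^sub>v z)" .
  qed (use sym_mat_carrier[OF A] in \<open>simp_all add: z_def\<close>)
  ultimately show ?thesis using z_low zc by blast
qed

lemma orthonormal_eigenvectors_extend:
  assumes A: "sym_mat n A" and u: "orthonormal n u k" and k: "k < n"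
    and eig: "\<And>j. j < k \<Longrightarrow> A *\<^sub>v u j = d j \<cdot>\<^sub>v u j"
  shows "\<exists>z \<mu>. orthonormal n (u(k := z)) (Suc k) \<and> A *\<^sub>v z = \<mu> \<cdot>\<^sub>v z"
proof -
  obtain w where w: "orthonormal n w n" and wu: "\<And>j. j < k \<Longrightarrow> w j = u j"
    using orthonormal_extend[OF u] k by auto
  obtain z0 \<mu> where z0: "z0 \<in> carrier_vec n" "z0 \<noteq> 0\<^sub>v n" "\<forall>j<k. w j \<bullet> z0 = 0" "A *\<^sub>v z0 = \<mu> \<cdot>\<^sub>v z0"
    using sym_mat_eigenvector_orthogonal[OF A w k, of d] eig wu by auto
  define z where "z = vnormalize z0"
  have "A *\<^sub>v z = \<mu> \<cdot>\<^sub>v z"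
    using mult_mat_vec[OF sym_mat_carrier[OF A] z0(1)] z0(4)
    by (simp add: z_def vnormalize_def smult_smult_assoc mult.commute)
  moreover have "orthonormal n (u(k := z)) (Suc k)"
    using u z0 wu vnormalize_unit[OF z0(1,2)] orthonormal_carrier[OF u] unfolding orthonormal_def
    by (auto simp: z_def vnormalize_def less_Suc_eq comm_scalar_prod[of _ n])
  ultimately show ?thesis by blast
qed

definition eigenbasis :: "nat \<Rightarrow> real mat \<Rightarrow> (nat \<Rightarrow> real vec) \<Rightarrow> (nat \<Rightarrow> real) \<Rightarrow> bool" where
  "eigenbasis n A u d \<longleftrightarrow> orthonormal n u n \<and> (\<forall>j<n. A *\<^sub>v u j = d j \<cdot>\<^sub>v u j) \<and>
     (\<forall>i j. i \<le> j \<longrightarrow> j < n \<longrightarrow> d i \<le> d j)"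

lemma eigenbasisD:
  assumes "eigenbasis n A u d"
  shows eigenbasis_orthonormal: "orthonormal n u n"
    and eigenbasis_eigen: "j < n \<Longrightarrow> A *\<^sub>v u j = d j \<cdot>\<^sub>v u j"
    and eigenbasis_sorted: "i \<le> j \<Longrightarrow> j < n \<Longrightarrow> d i \<le> d j"
  using assms unfolding eigenbasis_def by auto

lemma sym_mat_eigenbasis:
  assumes A: "sym_mat n A"
  shows "\<exists>u d. eigenbasis n A u d"
proof -
  have "\<exists>u d. orthonormal n u k \<and> (\<forall>j<k. A *\<^sub>v u j = d j \<cdot>\<^sub>v u j)" if "k \<le> n" for k
    using that
  proof (induction k)
    case 0
    then show ?case by (auto simp: orthonormal_def)
  next
    case (Suc k)
    then obtain u d where ud: "orthonormal n u k" "\<forall>j<k. A *\<^sub>v u j = d j \<cdot>\<^sub>v u j" by auto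
    then obtain z \<mu> where z: "orthonormal n (u(k := z)) (Suc k)" "A *\<^sub>v z = \<mu> \<cdot>\<^sub>v z"
      using orthonormal_eigenvectors_extend[OF A ud(1), of d] Suc.prems by auto
    have "\<forall>j<Suc k. A *\<^sub>v (u(k := z)) j = (d(k := \<mu>)) j \<cdot>\<^sub>v (u(k := z)) j"
      using z(2) ud(2) by (auto simp: less_Suc_eq)
    with z(1) show ?case by blast
  qed
  then obtain u d where u: "orthonormal n u n" and e: "\<forall>j<n. A *\<^sub>v u j = d j \<cdot>\<^sub>v u j" by blast
  define ix where "ix = sort_key d [0..<n]"
  have len: "length ix = n" and set: "set ix = {0..<n}" and dist: "distinct ix"
    by (simp_all add: ix_def)
  have ix: "\<And>i. i < n \<Longrightarrow> ix ! i < n" using set len by (metis atLeastLessThan_iff nth_mem)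
  have inj: "\<And>i j. i < n \<Longrightarrow> j < n \<Longrightarrow> ix ! i = ix ! j \<longleftrightarrow> i = j"
    using dist len by (simp add: nth_eq_iff_index_eq)
  have "sorted (map d ix)" unfolding ix_def by (rule sorted_sort_key)
  then have "eigenbasis n A (\<lambda>i. u (ix ! i)) (\<lambda>i. d (ix ! i))"
    using u e ix inj len unfolding eigenbasis_def orthonormal_def sorted_iff_nth_mono by auto
  then show ?thesis by blast
qed

lemma eigenbasis_entry:
  assumes A: "A \<in> carrier_mat n n" and E: "eigenbasis n A u d" and a: "a < n" and b: "b < n"
  shows "A $$ (a, b) = (\<Sum>j<n. d j * (u j $ a * u j $ b))"
proof -
  note u = eigenbasis_orthonormal[OF E]
  note uc = orthonormal_carrier[OF u]
  have "(\<Sum>j<n. d j * (u j $ a * u j $ b)) = (\<Sum>j<n. (A *\<^sub>v u j) $ a * u j $ b)"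
  proof (intro sum.cong refl)
    fix j assume "j \<in> {..<n}"
    then have "j < n" "dim_vec (u j) = n" using uc by auto
    then show "d j * (u j $ a * u j $ b) = (A *\<^sub>v u j) $ a * u j $ b"
      using eigenbasis_eigen[OF E] a by simp
  qed
  also have "\<dots> = (\<Sum>j<n. (\<Sum>c<n. A $$ (a, c) * u j $ c) * u j $ b)"
    using uc a by (intro sum.cong refl) (simp add: mult_mat_vec_via_sum[OF A])
  also have "\<dots> = (\<Sum>j<n. \<Sum>c<n. A $$ (a, c) * (u j $ c * u j $ b))"
    by (simp add: sum_distrib_left sum_distrib_right mult_ac)
  also have "\<dots> = (\<Sum>c<n. A $$ (a, c) * (if c = b then 1 else 0))"
    by (subst sum.swap) (simp add: sum_distrib_left[symmetric] orthonormal_completeness[OF u _ b])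
  also have "\<dots> = A $$ (a, b)" by (rule sum_mult_indicator[OF b])
  finally show ?thesis by simp
qed

lemma proots_linear_factors: "proots (\<Prod>a\<leftarrow>xs. [:- a, 1:]) = mset (xs :: real list)"
proof (induction xs)
  case (Cons a xs)
  have "(\<Prod>x\<leftarrow>xs. [:- x, 1:]) \<noteq> 0" by auto
  then have "proots ([:- a, 1:] * (\<Prod>x\<leftarrow>xs. [:- x, 1:])) = proots [:- a, 1:] + proots (\<Prod>x\<leftarrow>xs. [:- x, 1:])"
    by (intro proots_mult) auto
  then show ?case using Cons.IH by simp
qed simp

lemma eigs_eigenbasis:
  assumes A: "A \<in> carrier_mat n n" and E: "eigenbasis n A u d"
  shows "eigs A = map d [0..<n]"
proof -
  note u = eigenbasis_orthonormal[OF E]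
  define U where "U = mat n n (\<lambda>(i, a). u i $ a)"
  define D where "D = mat n n (\<lambda>(i, j). if i = j then d i else 0)"
  have U: "U \<in> carrier_mat n n" "transpose_mat U \<in> carrier_mat n n" and D: "D \<in> carrier_mat n n"
    by (auto simp: U_def D_def)
  have UUt: "U * transpose_mat U = 1\<^sub>m n"
  proof (rule eq_matI)
    fix i j assume ij: "i < dim_row (1\<^sub>m n)" "j < dim_col (1\<^sub>m n)"
    then have "(U * transpose_mat U) $$ (i, j) = u i \<bullet> u j"
      using orthonormal_carrier[OF u] by (simp add: U_def scalar_prod_via_sum[of _ n] row_def col_def)
    then show "(U * transpose_mat U) $$ (i, j) = 1\<^sub>m n $$ (i, j)"
      using orthonormal_scalar_prod[OF u] ij by simp
  qed (use U in auto)
  then have UtU: "transpose_mat U * U = 1\<^sub>m n" using mat_mult_left_right_inverse U by blast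
  have AD: "A = transpose_mat U * D * U"
  proof (rule eq_matI)
    fix a b assume "a < dim_row (transpose_mat U * D * U)" "b < dim_col (transpose_mat U * D * U)"
    then have a: "a < n" and b: "b < n" using U D by auto
    have "(transpose_mat U * D * U) $$ (a, b) = (\<Sum>k<n. (\<Sum>j<n. u j $ a * D $$ (j, k)) * u k $ b)"
      using a b U D by (simp add: U_def scalar_prod_via_sum[of _ n] row_def col_def)
    also have "\<dots> = (\<Sum>k<n. d k * (u k $ a * u k $ b))"
    proof (intro sum.cong refl)
      fix k assume "k \<in> {..<n}"
      then have "(\<Sum>j<n. u j $ a * D $$ (j, k)) = d k * (\<Sum>j<n. u j $ a * (if j = k then 1 else 0))"
        by (auto simp: D_def sum_distrib_left intro!: sum.cong)
      then show "(\<Sum>j<n. u j $ a * D $$ (j, k)) * u k $ b = d k * (u k $ a * u k $ b)"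
        using \<open>k \<in> {..<n}\<close> by (simp add: sum_mult_indicator)
    qed
    finally show "A $$ (a, b) = (transpose_mat U * D * U) $$ (a, b)"
      using eigenbasis_entry[OF A E a b] by simp
  qed (use A U D in auto)
  have "similar_mat_wit A D (transpose_mat U) U"
    unfolding similar_mat_wit_def Let_def using A U D UUt UtU AD by auto
  then have "similar_mat A D" unfolding similar_mat_def by blast
  then have "char_poly A = char_poly D" by (rule char_poly_similar)
  also have "\<dots> = (\<Prod>a\<leftarrow>diag_mat D. [:- a, 1:])"
    by (rule char_poly_upper_triangular[OF D]) (auto simp: upper_triangular_def D_def)
  also have "diag_mat D = map d [0..<n]" by (simp add: diag_mat_def D_def)
  finally have "eigs A = sort (map d [0..<n])"
    unfolding eigs_def by (simp only: proots_linear_factors sorted_list_of_multiset_mset)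
  moreover have "sorted (map d [0..<n])"
    unfolding sorted_iff_nth_mono using eigenbasis_sorted[OF E] by auto
  ultimately show ?thesis by (simp add: sorted_sort_id)
qed

lemma eigenbasis_lam:
  assumes A: "A \<in> carrier_mat n n" and E: "eigenbasis n A u d" and n: "0 < n"
  shows "lam_min A = d 0" and "lam_max A = d (n - 1)" and "1 < n \<Longrightarrow> lam_min2 A = d 1"
  using eigs_eigenbasis[OF A E] n by (auto simp: lam_min_def lam_max_def lam_min2_def last_map)

lemma eigenbasis_quad_form:
  assumes A: "sym_mat n A" and E: "eigenbasis n A u d" and x: "x \<in> carrier_vec n"
  shows "x \<bullet> (A *\<^sub>v x) = (\<Sum>j<n. d j * (u j \<bullet> x)\<^sup>2)"
proof -
  note u = eigenbasis_orthonormal[OF E]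
  have "x \<bullet> (A *\<^sub>v x) = (\<Sum>j<n. (u j \<bullet> x) * (u j \<bullet> (A *\<^sub>v x)))"
    by (rule orthonormal_parseval[OF u x]) (use sym_mat_carrier[OF A] x in simp)
  also have "\<dots> = (\<Sum>j<n. d j * (u j \<bullet> x)\<^sup>2)"
  proof (intro sum.cong refl)
    fix j assume "j \<in> {..<n}"
    then have j: "j < n" by simp
    have "u j \<bullet> (A *\<^sub>v x) = x \<bullet> (A *\<^sub>v u j)"
      by (rule sym_mat_bilinear_comm[OF A orthonormal_carrier[OF u j] x])
    then show "(u j \<bullet> x) * (u j \<bullet> (A *\<^sub>v x)) = d j * (u j \<bullet> x)\<^sup>2"
      using eigenbasis_eigen[OF E j] orthonormal_carrier[OF u j] x
      by (simp add: comm_scalar_prod[of x n] power2_eq_square)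
  qed
  finally show ?thesis .
qed

lemma orthonormal_square_sum:
  "orthonormal n u n \<Longrightarrow> x \<in> carrier_vec n \<Longrightarrow> x \<bullet> x = (\<Sum>j<n. (u j \<bullet> x)\<^sup>2)"
  using orthonormal_parseval[of n u x x] by (simp add: power2_eq_square)

subsection \<open>Extremal eigenvalues and quadratic forms\<close>

lemma lam_min_le_quad_form:
  assumes A: "sym_mat n A" and n: "0 < n" and x: "x \<in> carrier_vec n"
  shows "lam_min A * (x \<bullet> x) \<le> x \<bullet> (A *\<^sub>v x)"
proof -
  obtain u d where E: "eigenbasis n A u d" using sym_mat_eigenbasis[OF A] by blast
  have "lam_min A * (x \<bullet> x) = (\<Sum>j<n. d 0 * (u j \<bullet> x)\<^sup>2)"
    using eigenbasis_lam(1)[OF sym_mat_carrier[OF A] E n]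
      orthonormal_square_sum[OF eigenbasis_orthonormal[OF E] x] by (simp add: sum_distrib_left)
  also have "\<dots> \<le> (\<Sum>j<n. d j * (u j \<bullet> x)\<^sup>2)"
    by (intro sum_mono mult_right_mono) (use eigenbasis_sorted[OF E] in auto)
  also have "\<dots> = x \<bullet> (A *\<^sub>v x)" using eigenbasis_quad_form[OF A E x] by simp
  finally show ?thesis .
qed

lemma quad_form_le_lam_max:
  assumes A: "sym_mat n A" and n: "0 < n" and x: "x \<in> carrier_vec n"
  shows "x \<bullet> (A *\<^sub>v x) \<le> lam_max A * (x \<bullet> x)"
proof -
  obtain u d where E: "eigenbasis n A u d" using sym_mat_eigenbasis[OF A] by blast
  have "x \<bullet> (A *\<^sub>v x) = (\<Sum>j<n. d j * (u j \<bullet> x)\<^sup>2)" using eigenbasis_quad_form[OF A E x] .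
  also have "\<dots> \<le> (\<Sum>j<n. d (n - 1) * (u j \<bullet> x)\<^sup>2)"
    by (intro sum_mono mult_right_mono) (use eigenbasis_sorted[OF E] in auto)
  also have "\<dots> = lam_max A * (x \<bullet> x)"
    using eigenbasis_lam(2)[OF sym_mat_carrier[OF A] E n]
      orthonormal_square_sum[OF eigenbasis_orthonormal[OF E] x] by (simp add: sum_distrib_left)
  finally show ?thesis .
qed

lemma lam_min_eqI:
  assumes A: "sym_mat n A" and n: "0 < n"
    and lower: "\<And>x. x \<in> carrier_vec n \<Longrightarrow> x \<bullet> x = 1 \<Longrightarrow> \<mu> \<le> x \<bullet> (A *\<^sub>v x)"
    and v: "v \<in> carrier_vec n" "v \<bullet> v = 1" "v \<bullet> (A *\<^sub>v v) = \<mu>"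
  shows "lam_min A = \<mu>"
proof -
  obtain u d where E: "eigenbasis n A u d" using sym_mat_eigenbasis[OF A] by blast
  note u = eigenbasis_orthonormal[OF E]
  have "u 0 \<bullet> (A *\<^sub>v u 0) = d 0"
    using eigenbasis_eigen[OF E n] orthonormal_carrier[OF u n] orthonormal_scalar_prod[OF u n n] by simp
  then have "\<mu> \<le> lam_min A"
    using lower[OF orthonormal_carrier[OF u n]] orthonormal_scalar_prod[OF u n n]
      eigenbasis_lam(1)[OF sym_mat_carrier[OF A] E n] by simp
  moreover have "lam_min A \<le> \<mu>" using lam_min_le_quad_form[OF A n v(1)] v by simp
  ultimately show ?thesis by simp
qed

lemma eigenbasis_min_coeff_zero:
  assumes A: "sym_mat n A" and E: "eigenbasis n A u d" and v: "v \<in> carrier_vec n"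
    and vmin: "v \<bullet> (A *\<^sub>v v) = d 0 * (v \<bullet> v)" and j: "j < n" "d 0 < d j"
  shows "u j \<bullet> v = 0"
proof -
  have "(\<Sum>i<n. (d i - d 0) * (u i \<bullet> v)\<^sup>2) = v \<bullet> (A *\<^sub>v v) - d 0 * (v \<bullet> v)"
    using eigenbasis_quad_form[OF A E v] orthonormal_square_sum[OF eigenbasis_orthonormal[OF E] v]
    by (simp add: algebra_simps sum_subtractf sum_distrib_left)
  then have "(\<Sum>i<n. (d i - d 0) * (u i \<bullet> v)\<^sup>2) = 0" using vmin by simp
  moreover have "\<forall>i\<in>{..<n}. 0 \<le> (d i - d 0) * (u i \<bullet> v)\<^sup>2"
    using eigenbasis_sorted[OF E] by auto
  ultimately have "\<forall>i\<in>{..<n}. (d i - d 0) * (u i \<bullet> v)\<^sup>2 = 0"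
    using sum_nonneg_eq_0_iff[of "{..<n}" "\<lambda>i. (d i - d 0) * (u i \<bullet> v)\<^sup>2"] by simp
  then have "(d j - d 0) * (u j \<bullet> v)\<^sup>2 = 0" using j(1) by simp
  then show ?thesis using j(2) by simp
qed

lemma lam_min_eigenvector:
  assumes A: "sym_mat n A" and n: "0 < n" and v: "v \<in> carrier_vec n"
    and vmin: "v \<bullet> (A *\<^sub>v v) = lam_min A * (v \<bullet> v)"
  shows "A *\<^sub>v v = lam_min A \<cdot>\<^sub>v v"
proof -
  obtain u d where E: "eigenbasis n A u d" using sym_mat_eigenbasis[OF A] by blast
  note u = eigenbasis_orthonormal[OF E]
  have lm: "lam_min A = d 0" by (rule eigenbasis_lam(1)[OF sym_mat_carrier[OF A] E n])
  show ?thesis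
  proof (rule orthonormal_eqI[OF u])
    fix j assume j: "j < n"
    note uj = orthonormal_carrier[OF u j]
    have "u j \<bullet> (A *\<^sub>v v) = d j * (u j \<bullet> v)"
      using sym_mat_bilinear_comm[OF A uj v] eigenbasis_eigen[OF E j] uj v
      by (simp add: comm_scalar_prod[of v n])
    also have "\<dots> = d 0 * (u j \<bullet> v)"
      using eigenbasis_min_coeff_zero[OF A E v vmin[unfolded lm] j] eigenbasis_sorted[OF E, of 0 j] j
      by (cases "d 0 < d j") auto
    finally show "u j \<bullet> (A *\<^sub>v v) = u j \<bullet> (lam_min A \<cdot>\<^sub>v v)" using lm uj v by simp
  qed (use sym_mat_carrier[OF A] v in simp_all)
qed

lemma lam_min2_le_quad_form:
  assumes A: "sym_mat n A" and n: "1 < n"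
    and v: "v \<in> carrier_vec n" "v \<noteq> 0\<^sub>v n" and vmin: "v \<bullet> (A *\<^sub>v v) = lam_min A * (v \<bullet> v)"
    and x: "x \<in> carrier_vec n" and xv: "x \<bullet> v = 0"
  shows "lam_min2 A * (x \<bullet> x) \<le> x \<bullet> (A *\<^sub>v x)"
proof -
  obtain u d where E: "eigenbasis n A u d" using sym_mat_eigenbasis[OF A] by blast
  note u = eigenbasis_orthonormal[OF E] and sorted = eigenbasis_sorted[OF E]
  have n0: "0 < n" using n by simp
  have lm: "lam_min A = d 0" and lm2: "lam_min2 A = d 1"
    using eigenbasis_lam[OF sym_mat_carrier[OF A] E n0] n by auto
  have bound: "d 1 * (u j \<bullet> x)\<^sup>2 \<le> d j * (u j \<bullet> x)\<^sup>2" if "j < n" for j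
  proof (cases "j = 0 \<and> d 0 < d 1")
    case True
    have c: "u i \<bullet> v = 0" if "0 < i" "i < n" for i
      using eigenbasis_min_coeff_zero[OF A E v(1) vmin[unfolded lm]] sorted[of 1 i] that True by simp
    have "u 0 \<bullet> v \<noteq> 0"
    proof
      assume c0: "u 0 \<bullet> v = 0"
      have "v = 0\<^sub>v n"
      proof (rule orthonormal_eqI[OF u v(1)])
        fix i assume "i < n"
        then show "u i \<bullet> v = u i \<bullet> 0\<^sub>v n"
          using c c0 orthonormal_carrier[OF u] by (cases "i = 0") auto
      qed simp
      with v(2) show False ..
    qed
    moreover have "x \<bullet> v = (u 0 \<bullet> x) * (u 0 \<bullet> v)"
    proof -
      have "x \<bullet> v = (\<Sum>i<n. (u i \<bullet> x) * (u i \<bullet> v))" by (rule orthonormal_parseval[OF u x v(1)])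
      also have "\<dots> = (\<Sum>i<n. if i = 0 then (u 0 \<bullet> x) * (u 0 \<bullet> v) else 0)"
        using c by (intro sum.cong) auto
      finally show ?thesis using n0 by simp
    qed
    ultimately show ?thesis using xv True by simp
  next
    case False
    then show ?thesis using sorted[of 1 j] sorted[of 0 1] n that
      by (cases "j = 0") (auto intro: mult_right_mono)
  qed
  have "lam_min2 A * (x \<bullet> x) = (\<Sum>j<n. d 1 * (u j \<bullet> x)\<^sup>2)"
    using lm2 orthonormal_square_sum[OF u x] by (simp add: sum_distrib_left)
  also have "\<dots> \<le> (\<Sum>j<n. d j * (u j \<bullet> x)\<^sup>2)" by (intro sum_mono bound) simp
  also have "\<dots> = x \<bullet> (A *\<^sub>v x)" using eigenbasis_quad_form[OF A E x] by simp
  finally show ?thesis .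
qed

subsection \<open>Positive semidefinite matrices\<close>

lemma psdI: "A \<in> carrier_mat n n \<Longrightarrow> (\<And>v. v \<in> carrier_vec n \<Longrightarrow> 0 \<le> v \<bullet> (A *\<^sub>v v)) \<Longrightarrow> psd A"
  by (simp add: psd_def)

lemma psdD: "psd A \<Longrightarrow> A \<in> carrier_mat n n \<Longrightarrow> v \<in> carrier_vec n \<Longrightarrow> 0 \<le> v \<bullet> (A *\<^sub>v v)"
  by (simp add: psd_def)

definition frob_inner :: "real mat \<Rightarrow> real mat \<Rightarrow> real" where
  "frob_inner A B = (\<Sum>a<dim_row A. \<Sum>b<dim_col A. A $$ (a, b) * B $$ (a, b))"

lemma frob_inner_psd_nonneg:
  assumes T: "sym_mat n T" "psd T" and X: "X \<in> carrier_mat n n" "psd X"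
  shows "0 \<le> frob_inner T X"
proof -
  obtain u d where E: "eigenbasis n T u d" using sym_mat_eigenbasis[OF T(1)] by blast
  note uc = orthonormal_carrier[OF eigenbasis_orthonormal[OF E]]
  have d: "0 \<le> d j" if j: "j < n" for j
    using psdD[OF T(2) sym_mat_carrier[OF T(1)] uc[OF j]] eigenbasis_eigen[OF E j]
      orthonormal_scalar_prod[OF eigenbasis_orthonormal[OF E] j j] uc[OF j] by simp
  have "frob_inner T X = (\<Sum>a<n. \<Sum>b<n. \<Sum>j<n. d j * (u j $ a * X $$ (a, b) * u j $ b))"
    using sym_mat_carrier[OF T(1)] eigenbasis_entry[OF sym_mat_carrier[OF T(1)] E]
    by (simp add: frob_inner_def sum_distrib_left sum_distrib_right mult_ac)
  also have "\<dots> = (\<Sum>a<n. \<Sum>j<n. \<Sum>b<n. d j * (u j $ a * X $$ (a, b) * u j $ b))"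
    by (rule sum.cong[OF refl], rule sum.swap)
  also have "\<dots> = (\<Sum>j<n. \<Sum>a<n. \<Sum>b<n. d j * (u j $ a * X $$ (a, b) * u j $ b))"
    by (rule sum.swap)
  also have "\<dots> = (\<Sum>j<n. d j * (\<Sum>a<n. \<Sum>b<n. u j $ a * X $$ (a, b) * u j $ b))"
    by (simp add: sum_distrib_left)
  also have "\<dots> = (\<Sum>j<n. d j * (u j \<bullet> (X *\<^sub>v u j)))"
    using quad_form_via_sum[OF X(1) uc] by simp
  also have "\<dots> \<ge> 0"
    using d psdD[OF X(2) X(1) uc] by (auto intro!: sum_nonneg)
  finally show ?thesis .
qed

lemma unit_quatD: "unit_quat w \<Longrightarrow> w \<in> carrier_vec 4" "unit_quat w \<Longrightarrow> w \<bullet> w = 1"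
  by (simp_all add: unit_quat_def)

lemma sum_lessThan_3: "(\<Sum>i<3::nat. f i) = f 0 + f 1 + f 2"
  by (simp add: numeral_eq_Suc lessThan_Suc add.commute add.left_commute)

lemma sum_lessThan_4: "(\<Sum>i<4::nat. f i) = f 0 + f 1 + f 2 + f 3"
  by (simp add: numeral_eq_Suc lessThan_Suc add.commute add.left_commute)

lemma rotR_carrier [simp]: "rotR w \<in> carrier_mat 3 3"
  unfolding carrier_mat_def rotR_def Let_def mat_of_rows_list_def by (simp add: numeral_3_eq_3)

lemma rotR_mult_vec_carrier [simp]: "x \<in> carrier_vec 3 \<Longrightarrow> rotR w *\<^sub>v x \<in> carrier_vec 3"
  by (rule mult_mat_vec_carrier[OF rotR_carrier])

lemma rotR_entries:
  "rotR w $$ (0, 0) = w$0^2 + w$1^2 - w$2^2 - w$3^2"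
  "rotR w $$ (0, 1) = 2*(w$1*w$2 - w$0*w$3)"
  "rotR w $$ (0, 2) = 2*(w$1*w$3 + w$0*w$2)"
  "rotR w $$ (1, 0) = 2*(w$1*w$2 + w$0*w$3)"
  "rotR w $$ (1, 1) = w$0^2 + w$2^2 - w$1^2 - w$3^2"
  "rotR w $$ (1, 2) = 2*(w$2*w$3 - w$0*w$1)"
  "rotR w $$ (2, 0) = 2*(w$1*w$3 - w$0*w$2)"
  "rotR w $$ (2, 1) = 2*(w$2*w$3 + w$0*w$1)"
  "rotR w $$ (2, 2) = w$0^2 + w$3^2 - w$1^2 - w$2^2"
  by (simp_all add: rotR_def Let_def mat_of_rows_list_def)

lemma rotR_mult_vec_index:
  assumes "x \<in> carrier_vec 3"
  shows "(rotR w *\<^sub>v x) $ 0 = rotR w $$ (0, 0) * x$0 + rotR w $$ (0, 1) * x$1 + rotR w $$ (0, 2) * x$2"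
    and "(rotR w *\<^sub>v x) $ 1 = rotR w $$ (1, 0) * x$0 + rotR w $$ (1, 1) * x$1 + rotR w $$ (1, 2) * x$2"
    and "(rotR w *\<^sub>v x) $ 2 = rotR w $$ (2, 0) * x$0 + rotR w $$ (2, 1) * x$1 + rotR w $$ (2, 2) * x$2"
  using assms by (simp_all add: mult_mat_vec_via_sum[OF rotR_carrier] sum_lessThan_3)

lemma dim_rotR [simp]: "dim_row (rotR w) = 3" "dim_col (rotR w) = 3"
  by (simp_all add: rotR_def Let_def mat_of_rows_list_def numeral_3_eq_3)

text \<open>Euler--Rodrigues: the rotation matrix of a quaternion scales lengths by its squared norm.\<close>

lemma quat_rotation_norm_identity:
  fixes a b c d x0 x1 x2 :: real
  shows "((a^2 + b^2 - c^2 - d^2) * x0 + 2*(b*c - a*d) * x1 + 2*(b*d + a*c) * x2)\<^sup>2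
       + (2*(b*c + a*d) * x0 + (a^2 + c^2 - b^2 - d^2) * x1 + 2*(c*d - a*b) * x2)\<^sup>2
       + (2*(b*d - a*c) * x0 + 2*(c*d + a*b) * x1 + (a^2 + d^2 - b^2 - c^2) * x2)\<^sup>2
       = (a*a + b*b + c*c + d*d)\<^sup>2 * (x0*x0 + x1*x1 + x2*x2)"
  by (simp add: power2_eq_square algebra_simps)

lemma rotR_norm:
  assumes x: "x \<in> carrier_vec 3" and w: "w \<in> carrier_vec 4"
  shows "(rotR w *\<^sub>v x) \<bullet> (rotR w *\<^sub>v x) = (w \<bullet> w)\<^sup>2 * (x \<bullet> x)"
proof -
  have "dim_vec (rotR w *\<^sub>v x) = 3" using carrier_matD(1)[OF rotR_carrier[of w]] by simp
  then have "(rotR w *\<^sub>v x) \<bullet> (rotR w *\<^sub>v x) = ((rotR w *\<^sub>v x) $ 0)\<^sup>2 + ((rotR w *\<^sub>v x) $ 1)\<^sup>2 + ((rotR w *\<^sub>v x) $ 2)\<^sup>2"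
    by (simp add: scalar_prod_via_sum sum_lessThan_3 power2_eq_square)
  also have "\<dots> = (w \<bullet> w)\<^sup>2 * (x \<bullet> x)"
    unfolding rotR_mult_vec_index[OF x] rotR_entries
      scalar_prod_via_sum[OF carrier_vecD[OF w]] scalar_prod_via_sum[OF carrier_vecD[OF x]]
      sum_lessThan_3 sum_lessThan_4
    by (rule quat_rotation_norm_identity)
  finally show ?thesis .
qed

definition quat_corr_rows :: "real vec \<Rightarrow> real vec \<Rightarrow> real list list" where
  "quat_corr_rows y x = (let y0 = y $ 0; y1 = y $ 1; y2 = y $ 2; x0 = x $ 0; x1 = x $ 1; x2 = x $ 2 in
      [[y0*x0 + y1*x1 + y2*x2, y2*x1 - y1*x2, y0*x2 - y2*x0, y1*x0 - y0*x1],
       [y2*x1 - y1*x2, y0*x0 - y1*x1 - y2*x2, y0*x1 + y1*x0, y0*x2 + y2*x0],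
       [y0*x2 - y2*x0, y0*x1 + y1*x0, y1*x1 - y0*x0 - y2*x2, y1*x2 + y2*x1],
       [y1*x0 - y0*x1, y0*x2 + y2*x0, y1*x2 + y2*x1, y2*x2 - y0*x0 - y1*x1]])"

definition quat_corr_mat :: "real vec \<Rightarrow> real vec \<Rightarrow> real mat" where
  "quat_corr_mat y x = mat 4 4 (\<lambda>(a, b). quat_corr_rows y x ! a ! b)"

lemma quat_corr_mat_carrier [simp]: "quat_corr_mat y x \<in> carrier_mat 4 4"
  by (simp add: quat_corr_mat_def)

lemma sym_mat_quat_corr_mat: "sym_mat 4 (quat_corr_mat y x)"
proof (rule sym_matI[OF quat_corr_mat_carrier])
  fix i j :: nat assume "i < 4" "j < 4"
  then show "quat_corr_mat y x $$ (i, j) = quat_corr_mat y x $$ (j, i)"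
    by (auto simp: quat_corr_mat_def quat_corr_rows_def Let_def less_Suc_eq numeral_eq_Suc)
qed

lemma quat_corr_mat_quad_form:
  assumes x: "x \<in> carrier_vec 3" and y: "y \<in> carrier_vec 3" and w: "w \<in> carrier_vec 4"
  shows "w \<bullet> (quat_corr_mat y x *\<^sub>v w) = y \<bullet> (rotR w *\<^sub>v x)"
proof -
  have "w \<bullet> (quat_corr_mat y x *\<^sub>v w) = (\<Sum>a<4. \<Sum>b<4. w $ a * quat_corr_mat y x $$ (a, b) * w $ b)"
    by (rule quad_form_via_sum[OF quat_corr_mat_carrier w])
  also have "\<dots> = (\<Sum>a<4. \<Sum>b<4. w $ a * quat_corr_rows y x ! a ! b * w $ b)"
    by (intro sum.cong refl) (simp add: quat_corr_mat_def)
  also have "\<dots> = y \<bullet> (rotR w *\<^sub>v x)"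
    unfolding sum_lessThan_4 scalar_prod_via_sum[OF carrier_vecD[OF mult_mat_vec_carrier[OF rotR_carrier x]]]
      sum_lessThan_3 rotR_mult_vec_index[OF x] rotR_entries
    by (simp add: quat_corr_rows_def Let_def power2_eq_square algebra_simps)
  finally show ?thesis .
qed

definition quat_cost_mat :: "real vec \<Rightarrow> real vec \<Rightarrow> real mat" where
  "quat_cost_mat y x = (y \<bullet> y + x \<bullet> x) \<cdot>\<^sub>m 1\<^sub>m 4 - 2 \<cdot>\<^sub>m quat_corr_mat y x"

lemma sym_mat_quat_cost_mat: "sym_mat 4 (quat_cost_mat y x)"
  unfolding quat_cost_mat_def by (intro sym_mat_minus sym_mat_smult sym_mat_one sym_mat_quat_corr_mat)

lemma quat_cost_mat_quad_form:
  assumes x: "x \<in> carrier_vec 3" and y: "y \<in> carrier_vec 3" and w: "w \<in> carrier_vec 4"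
  shows "w \<bullet> (quat_cost_mat y x *\<^sub>v w) = (y \<bullet> y + x \<bullet> x) * (w \<bullet> w) - 2 * (y \<bullet> (rotR w *\<^sub>v x))"
  using quat_corr_mat_quad_form[OF assms] w
  by (simp add: quat_cost_mat_def quad_form_diff[of _ 4] quad_form_smult[of _ 4])

lemma quat_cost_mat_unit:
  assumes x: "x \<in> carrier_vec 3" and y: "y \<in> carrier_vec 3" and w: "unit_quat w"
  shows "w \<bullet> (quat_cost_mat y x *\<^sub>v w) = (vnorm (y - rotR w *\<^sub>v x))\<^sup>2"
proof -
  have wc: "w \<in> carrier_vec 4" and ww: "w \<bullet> w = 1" using w unfolding unit_quat_def by auto
  have Rx: "rotR w *\<^sub>v x \<in> carrier_vec 3" by (rule mult_mat_vec_carrier[OF rotR_carrier x])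
  have "(vnorm (y - rotR w *\<^sub>v x))\<^sup>2 = y \<bullet> y - 2 * (y \<bullet> (rotR w *\<^sub>v x)) + (rotR w *\<^sub>v x) \<bullet> (rotR w *\<^sub>v x)"
    using y Rx by (simp add: vnorm_square minus_scalar_prod_distrib[of _ 3] scalar_prod_minus_distrib[of _ 3]
        comm_scalar_prod[of "rotR w *\<^sub>v x" 3 y])
  then show ?thesis using quat_cost_mat_quad_form[OF x y wc] rotR_norm[OF x wc] ww by simp
qed

lemma psd_quat_cost_mat:
  assumes x: "x \<in> carrier_vec 3" and y: "y \<in> carrier_vec 3"
  shows "psd (quat_cost_mat y x)"
proof (rule psdI[OF sym_mat_carrier[OF sym_mat_quat_cost_mat]])
  fix w :: "real vec" assume w: "w \<in> carrier_vec 4"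
  have Rx: "rotR w *\<^sub>v x \<in> carrier_vec 3" by (rule mult_mat_vec_carrier[OF rotR_carrier x])
  have "vnorm (rotR w *\<^sub>v x) = (w \<bullet> w) * vnorm x"
    using rotR_norm[OF x w] scalar_prod_self_nonneg[of w] by (simp add: vnorm_def real_sqrt_mult)
  moreover have "y \<bullet> (rotR w *\<^sub>v x) \<le> vnorm y * vnorm (rotR w *\<^sub>v x)"
    using abs_scalar_prod_le_vnorm[OF y Rx] by linarith
  moreover have "2 * (vnorm y * vnorm x) \<le> y \<bullet> y + x \<bullet> x"
    using sum_squares_bound[of "vnorm y" "vnorm x"] vnorm_square[of y] vnorm_square[of x]
    by (simp add: power2_eq_square mult.assoc)
  ultimately have "2 * (y \<bullet> (rotR w *\<^sub>v x)) \<le> (y \<bullet> y + x \<bullet> x) * (w \<bullet> w)"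
    using scalar_prod_self_nonneg[of w] mult_left_mono[of "2 * (vnorm y * vnorm x)" "y \<bullet> y + x \<bullet> x" "w \<bullet> w"]
    by (simp add: mult_ac)
  then show "0 \<le> w \<bullet> (quat_cost_mat y x *\<^sub>v w)"
    using quat_cost_mat_quad_form[OF x y w] by simp
qed

lemma Qmat_eq_quat_cost_mat:
  assumes x: "x \<in> carrier_vec 3" and y: "y \<in> carrier_vec 3"
  shows "Qmat y x = quat_cost_mat y x"
  unfolding Qmat_def
proof (rule the_equality)
  show "quat_cost_mat y x \<in> carrier_mat 4 4 \<and> transpose_mat (quat_cost_mat y x) = quat_cost_mat y x \<and>
      (\<forall>w. unit_quat w \<longrightarrow> w \<bullet> (quat_cost_mat y x *\<^sub>v w) = (vnorm (y - rotR w *\<^sub>v x))\<^sup>2)"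
    using sym_mat_quat_cost_mat[of y x] quat_cost_mat_unit[OF x y] by (simp add: sym_mat_def)
next
  fix Q assume Q: "Q \<in> carrier_mat 4 4 \<and> transpose_mat Q = Q \<and>
      (\<forall>w. unit_quat w \<longrightarrow> w \<bullet> (Q *\<^sub>v w) = (vnorm (y - rotR w *\<^sub>v x))\<^sup>2)"
  show "Q = quat_cost_mat y x"
  proof (rule sym_mat_eq_if_unit_quad_forms_eq[OF _ sym_mat_quat_cost_mat])
    show "sym_mat 4 Q" using Q by (simp add: sym_mat_def)
    show "w \<bullet> (Q *\<^sub>v w) = w \<bullet> (quat_cost_mat y x *\<^sub>v w)" if "w \<in> carrier_vec 4" "w \<bullet> w = 1" for w
      using Q quat_cost_mat_unit[OF x y] that by (simp add: unit_quat_def)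
  qed
qed

lemma Pmat_eq_Qmat: "Pmat R0 x = Qmat (R0 *\<^sub>v x) x"
  unfolding Pmat_def Qmat_def ..

lemma Qmat_props:
  assumes "x \<in> carrier_vec 3" "y \<in> carrier_vec 3"
  shows sym_mat_Qmat: "sym_mat 4 (Qmat y x)"
    and psd_Qmat: "psd (Qmat y x)"
    and Qmat_unit: "unit_quat w \<Longrightarrow> w \<bullet> (Qmat y x *\<^sub>v w) = (vnorm (y - rotR w *\<^sub>v x))\<^sup>2"
  using Qmat_eq_quat_cost_mat[OF assms] sym_mat_quat_cost_mat psd_quat_cost_mat[OF assms]
    quat_cost_mat_unit[OF assms] by simp_all

lemma msum4_carrier [simp]: "msum4 f K \<in> carrier_mat 4 4"
  by (simp add: msum4_def)

lemma msum4_index: "a < 4 \<Longrightarrow> b < 4 \<Longrightarrow> msum4 f K $$ (a, b) = (\<Sum>i\<in>K. f i $$ (a, b))"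
  by (simp add: msum4_def)

lemma msum4_empty: "msum4 f {} = 0\<^sub>m 4 4"
  by (auto simp: msum4_def)

lemma msum4_insert:
  "finite K \<Longrightarrow> i \<notin> K \<Longrightarrow> f i \<in> carrier_mat 4 4 \<Longrightarrow> msum4 f (insert i K) = f i + msum4 f K"
  by (auto simp: msum4_def)

lemma msum4_quad_form:
  assumes "finite K" "\<And>i. i \<in> K \<Longrightarrow> f i \<in> carrier_mat 4 4" and v: "v \<in> carrier_vec 4"
  shows "v \<bullet> (msum4 f K *\<^sub>v v) = (\<Sum>i\<in>K. v \<bullet> (f i *\<^sub>v v))"
  using assms(1,2)
proof (induction K rule: finite_induct)
  case empty
  show ?case using v by (simp add: msum4_empty quad_form_via_sum[of _ 4])
next
  case (insert i K)
  then show ?case using v by (simp add: msum4_insert quad_form_add[of _ 4])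
qed

lemma sym_mat_msum4:
  assumes "finite K" "\<And>i. i \<in> K \<Longrightarrow> sym_mat 4 (f i)"
  shows "sym_mat 4 (msum4 f K)"
  using assms
  by (induction K rule: finite_induct)
    (auto simp: msum4_empty msum4_insert sym_mat_carrier intro: sym_mat_add sym_matI)

lemma frob_inner_diff_left:
  "A \<in> carrier_mat n n \<Longrightarrow> B \<in> carrier_mat n n \<Longrightarrow> frob_inner (A - B) X = frob_inner A X - frob_inner B X"
  by (simp add: frob_inner_def algebra_simps sum_subtractf)

lemma frob_inner_diff_right:
  "A \<in> carrier_mat n n \<Longrightarrow> Y \<in> carrier_mat n n \<Longrightarrow> frob_inner A (X - Y) = frob_inner A X - frob_inner A Y"
  by (simp add: frob_inner_def algebra_simps sum_subtractf)

lemma frob_inner_smult_one: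
  assumes "X \<in> carrier_mat n n"
  shows "frob_inner (c \<cdot>\<^sub>m 1\<^sub>m n) X = c * mtrace X"
proof -
  have "frob_inner (c \<cdot>\<^sub>m 1\<^sub>m n) X = (\<Sum>a<n. \<Sum>b<n. c * X $$ (a, b) * (if b = a then 1 else 0))"
    by (auto simp: frob_inner_def intro!: sum.cong)
  also have "\<dots> = (\<Sum>a<n. c * X $$ (a, a))" by (simp add: sum_mult_indicator)
  finally show ?thesis using assms by (simp add: mtrace_def sum_distrib_left)
qed

lemma frob_inner_add_left:
  "A \<in> carrier_mat n n \<Longrightarrow> B \<in> carrier_mat n n \<Longrightarrow> frob_inner (A + B) X = frob_inner A X + frob_inner B X"
  by (simp add: frob_inner_def algebra_simps sum.distrib)

lemma frob_inner_msum4: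
  assumes "finite K" "\<And>i. i \<in> K \<Longrightarrow> f i \<in> carrier_mat 4 4"
  shows "frob_inner (msum4 f K) X = (\<Sum>i\<in>K. frob_inner (f i) X)"
  using assms
proof (induction K rule: finite_induct)
  case empty
  show ?case by (simp add: msum4_empty frob_inner_def)
next
  case (insert i K)
  then show ?case by (simp add: msum4_insert frob_inner_add_left[of _ 4])
qed

lemma frob_inner_outer:
  "A \<in> carrier_mat n n \<Longrightarrow> w \<in> carrier_vec n \<Longrightarrow> frob_inner A (outer w) = w \<bullet> (A *\<^sub>v w)"
  by (simp add: frob_inner_def outer_def quad_form_via_sum mult_ac)

lemma frob_inner_certificate:
  assumes A: "sym_mat n A" and V: "sym_mat n V" "psd V" "psd (V - A)"
    and X: "X \<in> carrier_mat n n" "psd X" and X0: "X0 \<in> carrier_mat n n" "psd (X0 - X)"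
  shows "frob_inner (A - V) X0 \<le> frob_inner A X"
proof -
  have Ac: "A \<in> carrier_mat n n" and Vc: "V \<in> carrier_mat n n"
    using A V by (auto dest: sym_mat_carrier)
  have T: "sym_mat n (V - A)" by (rule sym_mat_minus[OF V(1) A])
  have "0 \<le> frob_inner (V - A) (X0 - X)"
    by (rule frob_inner_psd_nonneg[OF T V(3) minus_carrier_mat[OF X(1)] X0(2)])
  moreover have "0 \<le> frob_inner V X" by (rule frob_inner_psd_nonneg[OF V(1,2) X])
  ultimately show ?thesis
    using Ac Vc X X0 by (simp add: frob_inner_diff_left frob_inner_diff_right)
qed

lemma sum_blocks: "(\<Sum>r<4 * m. f r) = (\<Sum>i<m. \<Sum>a<4::nat. (f (4 * i + a) :: real))"
proof -
  have "(\<Sum>r<4 * m. f r) = (\<Sum>i<m. sum f {i * 4..<i * 4 + 4})"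
    by (simp add: sum.nat_group mult.commute)
  also have "\<dots> = (\<Sum>i<m. \<Sum>a<4::nat. f (4 * i + a))"
    by (rule sum.cong[OF refl]) (simp add: sum.atLeastLessThan_shift_0[of f] lessThan_atLeast0 algebra_simps)
  finally show ?thesis .
qed

lemma sum_of_bool_eq_mult: "i < (m::nat) \<Longrightarrow> (\<Sum>k<m. of_bool (k = i) * c k) = (c i :: real)"
  by (simp add: of_bool_def if_distrib[of "\<lambda>x. x * _"] cong: if_cong)

definition block_vec :: "nat \<Rightarrow> (nat \<Rightarrow> real) \<Rightarrow> real vec \<Rightarrow> real vec" where
  "block_vec m f x = vec (4 * m) (\<lambda>r. f (r div 4) * x $ (r mod 4))"

lemma block_vec_carrier [simp]: "block_vec m f x \<in> carrier_vec (4 * m)"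
  by (simp add: block_vec_def)

lemma block_vec_index: "i < m \<Longrightarrow> a < 4 \<Longrightarrow> block_vec m f x $ (4 * i + a) = f i * x $ a"
  by (simp add: block_vec_def)

lemma blk_index: "a < 4 \<Longrightarrow> b < 4 \<Longrightarrow> blk W i j $$ (a, b) = W $$ (4 * i + a, 4 * j + b)"
  by (simp add: blk_def)

lemma quad_form_block_vec:
  assumes W: "W \<in> carrier_mat (4 * m) (4 * m)" and x: "x \<in> carrier_vec 4"
  shows "block_vec m f x \<bullet> (W *\<^sub>v block_vec m f x) =
    (\<Sum>i<m. f i * (\<Sum>j<m. f j * (x \<bullet> (blk W i j *\<^sub>v x))))"
proof -
  have blk: "blk W i j \<in> carrier_mat 4 4" for i j by (simp add: blk_def)
  have "block_vec m f x \<bullet> (W *\<^sub>v block_vec m f x) =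
    (\<Sum>i<m. \<Sum>a<4. \<Sum>j<m. \<Sum>b<4. f i * x $ a * W $$ (4 * i + a, 4 * j + b) * (f j * x $ b))"
    using W by (simp add: quad_form_via_sum[OF W] sum_blocks block_vec_index)
  also have "\<dots> = (\<Sum>i<m. \<Sum>j<m. \<Sum>a<4. \<Sum>b<4. f i * x $ a * W $$ (4 * i + a, 4 * j + b) * (f j * x $ b))"
    by (rule sum.cong[OF refl], rule sum.swap)
  also have "\<dots> = (\<Sum>i<m. \<Sum>j<m. f i * (f j * (\<Sum>a<4. \<Sum>b<4. x $ a * blk W i j $$ (a, b) * x $ b)))"
    by (simp add: sum_distrib_left blk_index mult_ac)
  also have "\<dots> = (\<Sum>i<m. f i * (\<Sum>j<m. f j * (x \<bullet> (blk W i j *\<^sub>v x))))"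
    using x by (simp add: quad_form_via_sum[OF blk] sum_distrib_left)
  finally show ?thesis .
qed

lemma psd_blk_diag:
  assumes W: "W \<in> carrier_mat (4 * m) (4 * m)" "psd W" and i: "i < m"
  shows "psd (blk W i i)"
proof (rule psdI)
  fix x :: "real vec" assume x: "x \<in> carrier_vec 4"
  have "0 \<le> block_vec m (\<lambda>j. of_bool (j = i)) x \<bullet> (W *\<^sub>v block_vec m (\<lambda>j. of_bool (j = i)) x)"
    by (rule psdD[OF W(2,1)]) simp
  then show "0 \<le> x \<bullet> (blk W i i *\<^sub>v x)"
    using i by (simp add: quad_form_block_vec[OF W(1) x] sum_of_bool_eq_mult)
qed (simp add: blk_def)

lemma sdr_feasible_sym: "sdr_feasible l W \<Longrightarrow> sym_mat (4 * (l + 1)) W"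
  by (simp add: sdr_feasible_def sym_mat_def)

lemma psd_blk_diff:
  assumes W: "sdr_feasible l W" and i: "i \<in> {1..l}"
  shows "psd (blk W 0 0 - blk W i i)"
proof (rule psdI)
  define m where "m = l + 1"
  have Wsym: "sym_mat (4 * m) W" using sdr_feasible_sym[OF W] by (simp add: m_def)
  have Wc: "W \<in> carrier_mat (4 * m) (4 * m)" by (rule sym_mat_carrier[OF Wsym])
  have Wpsd: "psd W" and con: "relax_constr l W" using W by (auto simp: sdr_feasible_def)
  have im: "0 < i" "i < m" using i by (auto simp: m_def)
  have blk: "blk W i j \<in> carrier_mat 4 4" for i j by (simp add: blk_def)
  fix x :: "real vec" assume x: "x \<in> carrier_vec 4"
  define f :: "nat \<Rightarrow> real" where "f j = of_bool (j = 0) - of_bool (j = i)" for j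
  have "0 \<le> block_vec m f x \<bullet> (W *\<^sub>v block_vec m f x)"
    by (rule psdD[OF Wpsd Wc]) simp
  also have "\<dots> = x \<bullet> (blk W 0 0 *\<^sub>v x) - x \<bullet> (blk W 0 i *\<^sub>v x) - x \<bullet> (blk W i 0 *\<^sub>v x) + x \<bullet> (blk W i i *\<^sub>v x)"
    using im by (simp add: quad_form_block_vec[OF Wc x] f_def left_diff_distrib sum_subtractf sum_of_bool_eq_mult)
  also have "blk W 0 i = blk W i i" using con i by (simp add: relax_constr_def)
  also have "blk W i 0 = transpose_mat (blk W i i)"
  proof -
    have "blk W i 0 = transpose_mat (blk W 0 i)"
      using im sym_mat_entry[OF Wsym] by (intro eq_matI) (auto simp: blk_def)
    then show ?thesis using con i by (simp add: relax_constr_def)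
  qed
  also have "x \<bullet> (transpose_mat (blk W i i) *\<^sub>v x) = (transpose_mat (blk W i i) *\<^sub>v x) \<bullet> x"
    by (rule comm_scalar_prod[OF x]) (simp add: blk_def carrier_vecI)
  also have "\<dots> = x \<bullet> (blk W i i *\<^sub>v x)" by (rule transpose_vec_mult_scalar[OF blk x x])
  finally show "0 \<le> x \<bullet> ((blk W 0 0 - blk W i i) *\<^sub>v x)"
    by (simp add: quad_form_diff[OF blk blk x])
qed (simp add: blk_def minus_carrier_mat)

lemma bigQ_block_entry:
  assumes "i \<le> l" "j \<le> l" "a < 4" "b < 4"
  shows "bigQ l Q csq $$ (4 * i + a, 4 * j + b) =
    (if i = 0 \<and> 1 \<le> j then (Q j - csq j \<cdot>\<^sub>m 1\<^sub>m 4) $$ (a, b) / 2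
     else if j = 0 \<and> 1 \<le> i then (Q i - csq i \<cdot>\<^sub>m 1\<^sub>m 4) $$ (a, b) / 2 else 0)"
  using assms by (simp add: bigQ_def Let_def)

lemma sum_atMost_split_0: "(\<Sum>i<Suc l. h i) = h 0 + (\<Sum>i = 1..l. h i)"
  by (subst sum.lessThan_Suc_shift) (simp add: sum.atLeast1_atMost_eq)

lemma relax_obj_blocks:
  assumes W: "sym_mat (4 * (l + 1)) W" and con: "relax_constr l W"
  shows "relax_obj l Q csq W =
    (\<Sum>i = 1..l. frob_inner (Q i - csq i \<cdot>\<^sub>m 1\<^sub>m 4) (blk W i i)) + (\<Sum>i = 1..l. csq i)"
proof -
  define A where "A i = Q i - csq i \<cdot>\<^sub>m 1\<^sub>m 4" for i
  define B where "B = bigQ l Q csq"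
  define g where "g i j = (\<Sum>a<4. \<Sum>b<4. B $$ (4 * i + a, 4 * j + b) * W $$ (4 * j + b, 4 * i + a))" for i j
  have Wc: "W \<in> carrier_mat (4 * (l + 1)) (4 * (l + 1))" by (rule sym_mat_carrier[OF W])
  have Bc: "B \<in> carrier_mat (4 * (l + 1)) (4 * (l + 1))" by (simp add: B_def bigQ_def)
  have constr: "W $$ (a, 4 * j + b) = W $$ (4 * j + a, 4 * j + b)" if "j \<in> {1..l}" "a < 4" "b < 4" for j a b
    using arg_cong[of _ _ "\<lambda>M. M $$ (a, b)", OF bspec[OF conjunct1[OF con[unfolded relax_constr_def]] that(1)]]
      that by (simp add: blk_index)
  have Wsym: "W $$ (r, s) = W $$ (s, r)" if "r < 4 * (l + 1)" "s < 4 * (l + 1)" for r s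
    using sym_mat_entry[OF W that] .
  have B0j: "B $$ (a, 4 * j + b) = A j $$ (a, b) / 2" and Bj0: "B $$ (4 * j + a, b) = A j $$ (a, b) / 2"
    if "j \<in> {1..l}" "a < 4" "b < 4" for j a b
    using bigQ_block_entry[of 0 l j a b Q csq] bigQ_block_entry[of j l 0 a b Q csq] that
    by (simp_all add: B_def A_def)
  have W0j: "W $$ (4 * j + b, a) = W $$ (4 * j + a, 4 * j + b)" and Wj0: "W $$ (b, 4 * j + a) = W $$ (4 * j + a, 4 * j + b)"
    if "j \<in> {1..l}" "a < 4" "b < 4" for j a b
    using that constr[of j a b] constr[of j b a] Wsym[of "4 * j + b" a] Wsym[of "4 * j + b" "4 * j + a"] by auto
  have frob: "frob_inner (A j) (blk W j j) = (\<Sum>a<4. \<Sum>b<4. A j $$ (a, b) * W $$ (4 * j + a, 4 * j + b))" for j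
    by (simp add: frob_inner_def A_def blk_index)
  have g0j: "g 0 j = frob_inner (A j) (blk W j j) / 2" if j: "j \<in> {1..l}" for j
    unfolding frob g_def sum_divide_distrib using j by (intro sum.cong refl) (simp add: B0j W0j)
  have gj0: "g j 0 = frob_inner (A j) (blk W j j) / 2" if j: "j \<in> {1..l}" for j
    unfolding frob g_def sum_divide_distrib using j by (intro sum.cong refl) (simp add: Bj0 Wj0)
  have g_zero: "g i j = 0" if "i \<le> l" "j \<le> l" "i = 0 \<longleftrightarrow> j = 0" for i j
    using that by (auto simp: g_def B_def bigQ_block_entry)
  have "mtrace (B * W) = (\<Sum>r<4 * Suc l. \<Sum>s<4 * Suc l. B $$ (r, s) * W $$ (s, r))"
    using Bc Wc by (simp add: mtrace_def scalar_prod_via_sum[of _ "4 * (l + 1)"] row_def col_def)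
  also have "\<dots> = (\<Sum>i<Suc l. \<Sum>a<4. \<Sum>j<Suc l. \<Sum>b<4. B $$ (4 * i + a, 4 * j + b) * W $$ (4 * j + b, 4 * i + a))"
    by (simp only: sum_blocks)
  also have "\<dots> = (\<Sum>i<Suc l. \<Sum>j<Suc l. g i j)"
    unfolding g_def by (rule sum.cong[OF refl], rule sum.swap)
  also have "\<dots> = (\<Sum>j = 1..l. g 0 j) + (\<Sum>i = 1..l. g i 0)"
  proof -
    have "(\<Sum>j = 1..l. g i j) = 0" if "i \<in> {1..l}" for i
      using g_zero that by (intro sum.neutral) auto
    then show ?thesis
      unfolding sum_atMost_split_0 using g_zero[of 0 0] by simp
  qed
  also have "\<dots> = (\<Sum>j = 1..l. frob_inner (A j) (blk W j j))"
    by (simp add: g0j gj0 sum.distrib[symmetric])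
  finally show ?thesis by (simp add: relax_obj_def B_def A_def)
qed

lemma frob_inner_smult_right:
  "A \<in> carrier_mat n n \<Longrightarrow> X \<in> carrier_mat n n \<Longrightarrow> frob_inner A (c \<cdot>\<^sub>m X) = c * frob_inner A X"
  by (simp add: frob_inner_def sum_distrib_left mult_ac)

lemma outer_quad_form: "x \<in> carrier_vec (dim_vec v) \<Longrightarrow> x \<bullet> (outer v *\<^sub>v x) = (v \<bullet> (x :: real vec))\<^sup>2"
  by (simp add: quad_form_via_sum[OF outer_carrier] scalar_prod_via_sum[of _ "dim_vec v"] outer_def
      power2_eq_square sum_distrib_left sum_distrib_right mult_ac)

lemma sdr_feasible_outer: "qcqp_feasible l \<omega> \<Longrightarrow> sdr_feasible l (outer \<omega>)"
  unfolding qcqp_feasible_def sdr_feasible_def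
  using outer_carrier[of \<omega>] outer_quad_form[of _ \<omega>]
  by (auto intro!: psdI simp: outer_def)

lemma sdr_tightI:
  assumes feas: "qcqp_feasible l \<omega>\<^sub>0"
    and lower: "\<And>W. sdr_feasible l W \<Longrightarrow> relax_obj l Q csq (outer \<omega>\<^sub>0) \<le> relax_obj l Q csq W"
  shows "sdr_tight l Q csq"
proof -
  have min0: "qcqp_global_min l Q csq \<omega>\<^sub>0"
    unfolding qcqp_global_min_def using feas lower sdr_feasible_outer by blast
  have "sdr_global_min l Q csq (outer \<omega>)" if "qcqp_global_min l Q csq \<omega>" for \<omega>
  proof -
    have "qcqp_feasible l \<omega>" "relax_obj l Q csq (outer \<omega>) \<le> relax_obj l Q csq (outer \<omega>\<^sub>0)"
      using that feas unfolding qcqp_global_min_def by auto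
    then show ?thesis
      unfolding sdr_global_min_def using sdr_feasible_outer lower by (meson order_trans)
  qed
  then show ?thesis unfolding sdr_tight_def using min0 by blast
qed

definition quat_lift :: "nat \<Rightarrow> nat set \<Rightarrow> real vec \<Rightarrow> real vec" where
  "quat_lift l K w = block_vec (l + 1) (\<lambda>i. if i = 0 \<or> i \<in> K then 1 else 0) w"

lemma quat_lift_carrier: "quat_lift l K w \<in> carrier_vec (4 * (l + 1))"
  by (simp only: quat_lift_def block_vec_carrier)

lemma blk_outer_quat_lift:
  assumes "w \<in> carrier_vec 4" "i \<le> l" "j \<le> l"
  shows "blk (outer (quat_lift l K w)) i j =
    (if (i = 0 \<or> i \<in> K) \<and> (j = 0 \<or> j \<in> K) then outer w else 0\<^sub>m 4 4)"
  using assms by (auto simp: blk_def outer_def quat_lift_def block_vec_def)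

lemma mtrace_outer: "w \<in> carrier_vec n \<Longrightarrow> mtrace (outer w) = w \<bullet> w"
  by (simp add: mtrace_def outer_def scalar_prod_via_sum[of _ n])

lemma qcqp_feasible_quat_lift:
  assumes w: "unit_quat w"
  shows "qcqp_feasible l (quat_lift l K w)"
proof -
  have wc: "w \<in> carrier_vec 4" and ww: "w \<bullet> w = 1" using w by (auto simp: unit_quat_def)
  have "mtrace (blk (outer (quat_lift l K w)) 0 0) = 1"
    using wc ww by (simp add: blk_outer_quat_lift mtrace_outer)
  moreover have "blk (outer (quat_lift l K w)) 0 i = blk (outer (quat_lift l K w)) i i" if "i \<in> {1..l}" for i
    using that wc by (simp add: blk_outer_quat_lift)
  ultimately show ?thesis
    unfolding qcqp_feasible_def relax_constr_def using quat_lift_carrier by blast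
qed

lemma relax_obj_quat_lift:
  assumes w: "unit_quat w" and K: "K \<subseteq> {1..l}" and Q: "\<And>i. i \<in> K \<Longrightarrow> Q i \<in> carrier_mat 4 4"
  shows "relax_obj l Q csq (outer (quat_lift l K w)) = (\<Sum>i\<in>K. w \<bullet> (Q i *\<^sub>v w)) + (\<Sum>i\<in>{1..l} - K. csq i)"
proof -
  have wc: "w \<in> carrier_vec 4" and ww: "w \<bullet> w = 1" using w by (auto simp: unit_quat_def)
  define A where "A i = Q i - csq i \<cdot>\<^sub>m 1\<^sub>m 4" for i
  have Ac: "A i \<in> carrier_mat 4 4" for i by (simp add: A_def minus_carrier_mat)
  have diag_term: "frob_inner (A i) (blk (outer (quat_lift l K w)) i i) =
      (if i \<in> K then w \<bullet> (Q i *\<^sub>v w) - csq i else 0)" if i: "i \<in> {1..l}" for i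
  proof (cases "i \<in> K")
    case True
    have "frob_inner (A i) (outer w) = w \<bullet> (Q i *\<^sub>v w) - csq i"
      using frob_inner_outer[OF Ac wc] quad_form_diff[OF Q[OF True] _ wc] quad_form_smult[of "1\<^sub>m 4" 4 w] ww wc
      by (simp add: A_def)
    then show ?thesis using True i wc by (simp add: blk_outer_quat_lift)
  next
    case False
    then show ?thesis using i wc Ac[of i] by (simp add: blk_outer_quat_lift frob_inner_def)
  qed
  have "relax_obj l Q csq (outer (quat_lift l K w)) =
      (\<Sum>i = 1..l. if i \<in> K then w \<bullet> (Q i *\<^sub>v w) - csq i else 0) + (\<Sum>i = 1..l. csq i)"
    using relax_obj_blocks[OF sdr_feasible_sym[OF sdr_feasible_outer[OF qcqp_feasible_quat_lift[OF w]]]]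
      qcqp_feasible_quat_lift[OF w] diag_term
    by (simp add: qcqp_feasible_def A_def)
  also have "(\<Sum>i = 1..l. if i \<in> K then w \<bullet> (Q i *\<^sub>v w) - csq i else 0) = (\<Sum>i\<in>K. w \<bullet> (Q i *\<^sub>v w) - csq i)"
    using K by (simp add: sum.If_cases Int_absorb1)
  also have "(\<Sum>i = 1..l. csq i) = (\<Sum>i\<in>K. csq i) + (\<Sum>i\<in>{1..l} - K. csq i)"
    using sum.subset_diff[OF K, of csq] by simp
  finally show ?thesis by (simp add: sum_subtractf)
qed

lemma sdr_dual_certificate:
  assumes K: "K \<subseteq> {1..l}" and Q: "\<And>i. i \<in> {1..l} \<Longrightarrow> sym_mat 4 (Q i)"
    and outliers: "\<And>j. j \<in> {1..l} - K \<Longrightarrow> psd (Q j - csq j \<cdot>\<^sub>m 1\<^sub>m 4)"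
    and V: "\<And>i. i \<in> K \<Longrightarrow> sym_mat 4 (V i)" "\<And>i. i \<in> K \<Longrightarrow> psd (V i)"
      "\<And>i. i \<in> K \<Longrightarrow> psd (V i - (Q i - csq i \<cdot>\<^sub>m 1\<^sub>m 4))"
    and total: "\<And>v. v \<in> carrier_vec 4 \<Longrightarrow>
      (\<Sum>i\<in>K. v \<bullet> ((Q i - csq i \<cdot>\<^sub>m 1\<^sub>m 4 - V i) *\<^sub>v v)) = \<mu> * (v \<bullet> v)"
    and W: "sdr_feasible l W"
  shows "\<mu> + (\<Sum>i = 1..l. csq i) \<le> relax_obj l Q csq W"
proof -
  define A where "A i = Q i - csq i \<cdot>\<^sub>m 1\<^sub>m 4" for i
  define X where "X i = blk W i i" for i
  have finK: "finite K" using K finite_subset by blast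
  have A: "sym_mat 4 (A i)" if "i \<in> {1..l}" for i
    unfolding A_def by (intro sym_mat_minus sym_mat_smult sym_mat_one Q that)
  have Wc: "W \<in> carrier_mat (4 * (l + 1)) (4 * (l + 1))" and con: "relax_constr l W"
    using W by (auto simp: sdr_feasible_def)
  have Xc: "X i \<in> carrier_mat 4 4" for i by (simp add: X_def blk_def)
  have Xpsd: "psd (X i)" if "i \<le> l" for i
    unfolding X_def using W that by (intro psd_blk_diag[OF Wc]) (auto simp: sdr_feasible_def)
  have AVc: "A i - V i \<in> carrier_mat 4 4" if "i \<in> K" for i
    using sym_mat_carrier[OF V(1)[OF that]] by (simp add: minus_carrier_mat)
  have "msum4 (\<lambda>i. A i - V i) K = \<mu> \<cdot>\<^sub>m 1\<^sub>m 4"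
  proof (rule sym_mat_eq_if_unit_quad_forms_eq)
    show "sym_mat 4 (msum4 (\<lambda>i. A i - V i) K)"
      using finK K A V(1) by (intro sym_mat_msum4 sym_mat_minus) auto
    show "w \<bullet> (msum4 (\<lambda>i. A i - V i) K *\<^sub>v w) = w \<bullet> ((\<mu> \<cdot>\<^sub>m 1\<^sub>m 4) *\<^sub>v w)" if "w \<in> carrier_vec 4" for w
      using msum4_quad_form[OF finK AVc that] total[OF that] quad_form_smult[of "1\<^sub>m 4" 4 w \<mu>] that
      by (simp add: A_def)
  qed (intro sym_mat_smult sym_mat_one)
  then have "\<mu> = (\<Sum>i\<in>K. frob_inner (A i - V i) (X 0))"
    using frob_inner_msum4[of K "\<lambda>i. A i - V i" "X 0"] finK AVc frob_inner_smult_one[OF Xc, of \<mu> 0] con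
    by (simp add: relax_constr_def X_def)
  also have "\<dots> \<le> (\<Sum>i\<in>K. frob_inner (A i) (X i))"
  proof (rule sum_mono)
    fix i assume i: "i \<in> K"
    then have "i \<in> {1..l}" using K by blast
    then show "frob_inner (A i - V i) (X 0) \<le> frob_inner (A i) (X i)"
      using frob_inner_certificate[OF A V(1,2)[OF i] V(3)[OF i, folded A_def] Xc Xpsd Xc] psd_blk_diff[OF W]
      by (auto simp: X_def)
  qed
  also have "\<dots> \<le> (\<Sum>i\<in>K. frob_inner (A i) (X i)) + (\<Sum>i\<in>{1..l} - K. frob_inner (A i) (X i))"
  proof -
    have "0 \<le> frob_inner (A j) (X j)" if j: "j \<in> {1..l} - K" for j
      using j by (intro frob_inner_psd_nonneg[OF A outliers[OF j, folded A_def] Xc Xpsd]) auto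
    then have "0 \<le> (\<Sum>i\<in>{1..l} - K. frob_inner (A i) (X i))" by (rule sum_nonneg)
    then show ?thesis by simp
  qed
  also have "\<dots> = (\<Sum>i = 1..l. frob_inner (A i) (X i))"
    using sum.subset_diff[OF K, of "\<lambda>i. frob_inner (A i) (X i)"] by simp
  finally show ?thesis
    using relax_obj_blocks[OF sdr_feasible_sym[OF W] con] by (simp add: A_def X_def)
qed

lemma tls_global_min_inlier_optimal:
  assumes w: "tls_global_min l Q csq w" and K: "K \<subseteq> {1..l}"
    and inliers: "\<And>i. i \<in> K \<Longrightarrow> w \<bullet> (Q i *\<^sub>v w) \<le> csq i"
    and outliers: "\<And>j v. j \<in> {1..l} - K \<Longrightarrow> unit_quat v \<Longrightarrow> csq j \<le> v \<bullet> (Q j *\<^sub>v v)"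
    and v: "unit_quat v"
  shows "(\<Sum>i\<in>K. w \<bullet> (Q i *\<^sub>v w)) \<le> (\<Sum>i\<in>K. v \<bullet> (Q i *\<^sub>v v))"
proof -
  have split: "tls_obj l Q csq u = (\<Sum>i\<in>K. min (u \<bullet> (Q i *\<^sub>v u)) (csq i)) + (\<Sum>i\<in>{1..l} - K. min (u \<bullet> (Q i *\<^sub>v u)) (csq i))" for u
    unfolding tls_obj_def using sum.subset_diff[OF K, of "\<lambda>i. min (u \<bullet> (Q i *\<^sub>v u)) (csq i)"] by simp
  have wu: "unit_quat w" using w by (simp add: tls_global_min_def)
  have "tls_obj l Q csq w = (\<Sum>i\<in>K. w \<bullet> (Q i *\<^sub>v w)) + (\<Sum>i\<in>{1..l} - K. csq i)"
    unfolding split using inliers outliers[OF _ wu] by (intro arg_cong2[of _ _ _ _ "(+)"] sum.cong) auto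
  moreover have "tls_obj l Q csq v \<le> (\<Sum>i\<in>K. v \<bullet> (Q i *\<^sub>v v)) + (\<Sum>i\<in>{1..l} - K. csq i)"
    unfolding split by (intro add_mono sum_mono) auto
  moreover have "tls_obj l Q csq w \<le> tls_obj l Q csq v" using w v by (simp add: tls_global_min_def)
  ultimately show ?thesis by simp
qed

lemma psd_msum4:
  assumes "finite K" "\<And>i. i \<in> K \<Longrightarrow> f i \<in> carrier_mat 4 4" "\<And>i. i \<in> K \<Longrightarrow> psd (f i)"
  shows "psd (msum4 f K)"
proof (rule psdI[OF msum4_carrier])
  fix v :: "real vec" assume v: "v \<in> carrier_vec 4"
  have "0 \<le> v \<bullet> (f i *\<^sub>v v)" if "i \<in> K" for i
    using psdD[OF assms(3)[OF that] assms(2)[OF that] v] .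
  then have "0 \<le> (\<Sum>i\<in>K. v \<bullet> (f i *\<^sub>v v))" by (rule sum_nonneg)
  then show "0 \<le> v \<bullet> (msum4 f K *\<^sub>v v)" using msum4_quad_form[OF assms(1,2) v] by simp
qed

lemma lam_min2_sin_sq_le:
  assumes P: "sym_mat n P" "psd P" and n: "1 < n"
    and w0: "w0 \<in> carrier_vec n" "w0 \<bullet> w0 = 1" "w0 \<bullet> (P *\<^sub>v w0) = 0"
    and w: "w \<in> carrier_vec n" "w \<bullet> w = 1"
  shows "lam_min2 P * (1 - (w \<bullet> w0)\<^sup>2) \<le> w \<bullet> (P *\<^sub>v w)"
proof -
  define u where "u = orth_proj w0 w"
  have uc: "u \<in> carrier_vec n" and uw0: "u \<bullet> w0 = 0"
    using orth_proj_carrier[OF w0(1) w(1)] orth_proj_orthogonal[OF w0(1,2) w(1)] by (simp_all add: u_def)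
  have "lam_min P = 0"
    using w0 psdD[OF P(2) sym_mat_carrier[OF P(1)]] n by (intro lam_min_eqI[OF P(1)]) auto
  then have Pw0: "P *\<^sub>v w0 = 0\<^sub>v n"
    using lam_min_eigenvector[OF P(1) _ w0(1)] w0 n by auto
  have "w0 \<noteq> 0\<^sub>v n" using w0(2) by auto
  then have "lam_min2 P * (u \<bullet> u) \<le> u \<bullet> (P *\<^sub>v u)"
    using lam_min2_le_quad_form[OF P(1) n w0(1) _ _ uc uw0] w0(3) \<open>lam_min P = 0\<close> by simp
  moreover have "u \<bullet> u = 1 - (w \<bullet> w0)\<^sup>2"
    using scalar_prod_orth_proj_decomp[OF w0(1,2) w(1)] w comm_scalar_prod[OF w(1) w0(1)]
    by (simp add: u_def)
  moreover have "w \<bullet> (P *\<^sub>v w) = u \<bullet> (P *\<^sub>v u)"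
    using quad_form_orth_proj_decomp[OF P(1) w0(1) w(1)] Pw0 uc w0(1) by (simp add: u_def)
  ultimately show ?thesis by simp
qed

lemma vnorm_rotR_unit: "unit_quat w \<Longrightarrow> x \<in> carrier_vec 3 \<Longrightarrow> vnorm (rotR w *\<^sub>v x) = vnorm x"
  using rotR_norm[of x w] by (simp add: unit_quat_def vnorm_def)

lemma inlier_residual_bound:
  fixes x y eps :: "nat \<Rightarrow> real vec"
  assumes w0: "unit_quat w0" and w: "unit_quat w" and K: "finite K"
    and data: "\<And>i. i \<in> K \<Longrightarrow> x i \<in> carrier_vec 3 \<and> eps i \<in> carrier_vec 3 \<and> y i = rotR w0 *\<^sub>v x i + eps i"
    and opt: "(\<Sum>i\<in>K. w \<bullet> (Qmat (y i) (x i) *\<^sub>v w)) \<le> (\<Sum>i\<in>K. w0 \<bullet> (Qmat (y i) (x i) *\<^sub>v w0))"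
  shows "w \<bullet> (msum4 (\<lambda>i. Pmat (rotR w0) (x i)) K *\<^sub>v w) \<le> 4 * (\<Sum>i\<in>K. vnorm (eps i) * vnorm (x i))"
proof -
  define r where "r i = rotR w0 *\<^sub>v x i - rotR w *\<^sub>v x i" for i
  have xc: "x i \<in> carrier_vec 3" and ec: "eps i \<in> carrier_vec 3" and rc: "r i \<in> carrier_vec 3"
    and yc: "y i \<in> carrier_vec 3" if "i \<in> K" for i
    using data[OF that] by (auto simp: r_def)
  have Q_w: "w \<bullet> (Qmat (y i) (x i) *\<^sub>v w) = eps i \<bullet> eps i + 2 * (eps i \<bullet> r i) + r i \<bullet> r i" if i: "i \<in> K" for i
  proof -
    have "y i - rotR w *\<^sub>v x i = eps i + r i"
      by (rule eq_vecI) (use data[OF i] xc[OF i] ec[OF i] in \<open>auto simp: r_def\<close>)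
    then show ?thesis
      using Qmat_unit[OF xc[OF i] yc[OF i] w] ec[OF i] rc[OF i]
      by (simp add: vnorm_square add_scalar_prod_distrib[of _ 3] scalar_prod_add_distrib[of _ 3]
          comm_scalar_prod[of "r i" 3 "eps i"])
  qed
  have Q_w0: "w0 \<bullet> (Qmat (y i) (x i) *\<^sub>v w0) = eps i \<bullet> eps i" if i: "i \<in> K" for i
  proof -
    have "y i - rotR w0 *\<^sub>v x i = eps i"
      by (rule eq_vecI) (use data[OF i] xc[OF i] ec[OF i] in auto)
    then show ?thesis using Qmat_unit[OF xc[OF i] yc[OF i] w0] by (simp add: vnorm_square)
  qed
  have R0x: "rotR w0 *\<^sub>v x i \<in> carrier_vec 3" if "i \<in> K" for i using xc[OF that] by simp
  have P_w: "w \<bullet> (Pmat (rotR w0) (x i) *\<^sub>v w) = r i \<bullet> r i" if i: "i \<in> K" for i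
    using Qmat_unit[OF xc[OF i] R0x[OF i] w] by (simp add: Pmat_eq_Qmat vnorm_square r_def)
  have Pc: "Pmat (rotR w0) (x i) \<in> carrier_mat 4 4" if "i \<in> K" for i
    using sym_mat_carrier[OF sym_mat_Qmat[OF xc[OF that] R0x[OF that]]] by (simp add: Pmat_eq_Qmat)
  have r_le: "vnorm (r i) \<le> 2 * vnorm (x i)" if i: "i \<in> K" for i
    using vnorm_diff_le[OF R0x[OF i], of "rotR w *\<^sub>v x i"] xc[OF i]
      vnorm_rotR_unit[OF w0 xc[OF i]] vnorm_rotR_unit[OF w xc[OF i]] by (simp add: r_def)
  have "(\<Sum>i\<in>K. eps i \<bullet> eps i + 2 * (eps i \<bullet> r i) + r i \<bullet> r i) \<le> (\<Sum>i\<in>K. eps i \<bullet> eps i)"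
    using opt Q_w Q_w0 by simp
  then have "(\<Sum>i\<in>K. r i \<bullet> r i) \<le> 2 * (\<Sum>i\<in>K. - (eps i \<bullet> r i))"
    by (simp add: sum.distrib sum_distrib_left[symmetric] sum_negf)
  also have "\<dots> \<le> 2 * (\<Sum>i\<in>K. vnorm (eps i) * vnorm (r i))"
  proof -
    have "- (eps i \<bullet> r i) \<le> vnorm (eps i) * vnorm (r i)" if "i \<in> K" for i
      using abs_scalar_prod_le_vnorm[OF ec[OF that] rc[OF that]] by linarith
    then show ?thesis by (simp add: sum_mono)
  qed
  also have "\<dots> \<le> 2 * (\<Sum>i\<in>K. vnorm (eps i) * (2 * vnorm (x i)))"
  proof -
    have "vnorm (eps i) * vnorm (r i) \<le> vnorm (eps i) * (2 * vnorm (x i))" if "i \<in> K" for i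
      using r_le[OF that] vnorm_nonneg[of "eps i"] by (rule mult_left_mono)
    then show ?thesis by (simp add: sum_mono)
  qed
  finally show ?thesis
    using msum4_quad_form[OF K Pc unit_quatD(1)[OF w]] P_w by (simp add: sum_distrib_left mult_ac)
qed

lemma rotation_error_bound:
  fixes x y eps :: "nat \<Rightarrow> real vec"
  assumes w0: "unit_quat w0" and w: "unit_quat w" and K: "finite K"
    and data: "\<And>i. i \<in> K \<Longrightarrow> x i \<in> carrier_vec 3 \<and> eps i \<in> carrier_vec 3 \<and> y i = rotR w0 *\<^sub>v x i + eps i"
    and opt: "(\<Sum>i\<in>K. w \<bullet> (Qmat (y i) (x i) *\<^sub>v w)) \<le> (\<Sum>i\<in>K. w0 \<bullet> (Qmat (y i) (x i) *\<^sub>v w0))"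
    and pos: "0 < lam_min2 (msum4 (\<lambda>i. Pmat (rotR w0) (x i)) K)"
  shows "1 - (w \<bullet> w0)\<^sup>2 \<le> 4 * (\<Sum>i\<in>K. vnorm (eps i) * vnorm (x i)) / lam_min2 (msum4 (\<lambda>i. Pmat (rotR w0) (x i)) K)"
proof -
  define P where "P = msum4 (\<lambda>i. Pmat (rotR w0) (x i)) K"
  have Pi: "sym_mat 4 (Pmat (rotR w0) (x i))" "psd (Pmat (rotR w0) (x i))"
    "w0 \<bullet> (Pmat (rotR w0) (x i) *\<^sub>v w0) = 0" if "i \<in> K" for i
    using sym_mat_Qmat[of "x i"] psd_Qmat[of "x i"] Qmat_unit[of "x i" _ w0] data[OF that] w0
    by (simp_all add: Pmat_eq_Qmat vnorm_def minus_cancel_vec[of _ 3])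
  have P: "sym_mat 4 P" "psd P"
    unfolding P_def using K Pi sym_mat_carrier by (auto intro!: sym_mat_msum4 psd_msum4)
  have "w0 \<bullet> (P *\<^sub>v w0) = 0"
    using msum4_quad_form[OF K _ unit_quatD(1)[OF w0]] Pi(1,3) sym_mat_carrier by (simp add: P_def)
  then have "lam_min2 P * (1 - (w \<bullet> w0)\<^sup>2) \<le> w \<bullet> (P *\<^sub>v w)"
    using lam_min2_sin_sq_le[OF P _ unit_quatD[OF w0] _ unit_quatD[OF w]] by simp
  also have "\<dots> \<le> 4 * (\<Sum>i\<in>K. vnorm (eps i) * vnorm (x i))"
    unfolding P_def by (rule inlier_residual_bound[OF w0 w K data opt])
  finally show ?thesis using pos by (simp add: P_def pos_le_divide_eq mult.commute)
qed

lemma certificate_margin: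
  fixes t un nq qw c L lam kk sS qQ q d csq :: real
  assumes un: "0 \<le> un" and nq: "0 \<le> nq" and qw: "\<bar>qw\<bar> \<le> un * nq" and c: "0 \<le> c"
    and L: "kk * qQ - sS \<le> L * un\<^sup>2" and kk: "0 < kk"
    and d: "d = lam / kk - q + c * L" and margin: "q + nq + (\<bar>d\<bar> + d) / 2 < csq"
  shows "qQ + 2 * t * qw + t\<^sup>2 * q - csq * (un\<^sup>2 + t\<^sup>2) \<le> c * sS + (1 - c * kk) * qQ - lam / kk * un\<^sup>2"
proof -
  have "t * qw \<le> \<bar>t\<bar> * \<bar>qw\<bar>" by (simp only: abs_mult[symmetric] abs_ge_self)
  also have "\<dots> \<le> \<bar>t\<bar> * (un * nq)" using qw by (rule mult_left_mono) simp
  finally have "2 * t * qw \<le> 2 * \<bar>t\<bar> * (un * nq)" by simp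
  also have "\<dots> \<le> nq * (t\<^sup>2 + un\<^sup>2)"
    using nq sum_squares_bound[of "\<bar>t\<bar>" un] by (simp add: mult_left_mono power2_eq_square mult_ac)
  finally have cross: "2 * t * qw \<le> nq * (t\<^sup>2 + un\<^sup>2)" .
  have coeff: "c * (kk * qQ - sS) \<le> c * (L * un\<^sup>2)" using L c by (rule mult_left_mono)
  have half: "0 \<le> (\<bar>d\<bar> + d) / 2" "d \<le> (\<bar>d\<bar> + d) / 2" by auto
  have "q + nq \<le> csq" using margin half(1) by linarith
  then have t_part: "t\<^sup>2 * (q + nq) \<le> t\<^sup>2 * csq" by (simp add: mult_left_mono)
  have "lam / kk + c * L + nq \<le> csq" using margin half(2) d by linarith
  then have u_part: "un\<^sup>2 * (lam / kk + c * L + nq) \<le> un\<^sup>2 * csq" by (simp add: mult_left_mono)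
  show ?thesis using cross coeff t_part u_part by (simp add: algebra_simps)
qed

locale tls_inlier_setting =
  fixes l k :: nat and Q :: "nat \<Rightarrow> real mat" and csq :: "nat \<Rightarrow> real" and w :: "real vec"
  assumes Q_sym: "\<And>i. i \<in> {1..l} \<Longrightarrow> sym_mat 4 (Q i)"
    and Q_psd: "\<And>i. i \<in> {1..l} \<Longrightarrow> psd (Q i)"
    and k: "2 \<le> k" "k \<le> l"
    and tls_min: "tls_global_min l Q csq w"
    and outliers_above: "\<And>j. j \<in> {k + 1..l} \<Longrightarrow> csq j < lam_min (Q j)"
    and inliers_below: "\<And>i. i \<in> {1..k} \<Longrightarrow> w \<bullet> (Q i *\<^sub>v w) < csq i"
begin

definition inlier_mat :: "real mat" where
  "inlier_mat = msum4 Q {1..k}"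

lemma w_unit: "unit_quat w" "w \<in> carrier_vec 4" "w \<bullet> w = 1"
  using tls_min by (simp_all add: tls_global_min_def unit_quat_def)

lemma inliers_subset: "{1..k} \<subseteq> {1..l}"
  using k by auto

lemma Q_carrier: "i \<in> {1..l} \<Longrightarrow> Q i \<in> carrier_mat 4 4"
  using Q_sym sym_mat_carrier by blast

lemma sym_inlier_mat: "sym_mat 4 inlier_mat"
  unfolding inlier_mat_def using Q_sym inliers_subset by (intro sym_mat_msum4) auto

lemma inlier_mat_quad_form:
  "v \<in> carrier_vec 4 \<Longrightarrow> v \<bullet> (inlier_mat *\<^sub>v v) = (\<Sum>i = 1..k. v \<bullet> (Q i *\<^sub>v v))"
  unfolding inlier_mat_def using Q_carrier inliers_subset by (intro msum4_quad_form) auto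

lemma inlier_optimal:
  assumes v: "unit_quat v"
  shows "(\<Sum>i = 1..k. w \<bullet> (Q i *\<^sub>v w)) \<le> (\<Sum>i = 1..k. v \<bullet> (Q i *\<^sub>v v))"
proof (rule tls_global_min_inlier_optimal[OF tls_min inliers_subset _ _ v])
  show "w \<bullet> (Q i *\<^sub>v w) \<le> csq i" if "i \<in> {1..k}" for i
    using inliers_below[OF that] by simp
  show "csq j \<le> u \<bullet> (Q j *\<^sub>v u)" if j: "j \<in> {1..l} - {1..k}" and u: "unit_quat u" for j u
  proof -
    have "j \<in> {k + 1..l}" "j \<in> {1..l}" using j by auto
    then show ?thesis
      using outliers_above lam_min_le_quad_form[OF Q_sym _ unit_quatD(1)[OF u]] unit_quatD(2)[OF u]
      by fastforce
  qed
qed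

lemma psd_outlier_shift:
  assumes j: "j \<in> {1..l} - {1..k}"
  shows "psd (Q j - csq j \<cdot>\<^sub>m 1\<^sub>m 4)"
proof (rule psdI)
  have jl: "j \<in> {1..l}" and jk: "j \<in> {k + 1..l}" using j by auto
  show "Q j - csq j \<cdot>\<^sub>m 1\<^sub>m 4 \<in> carrier_mat 4 4" by (simp add: minus_carrier_mat)
  fix v :: "real vec" assume v: "v \<in> carrier_vec 4"
  have "csq j * (v \<bullet> v) \<le> lam_min (Q j) * (v \<bullet> v)"
    using outliers_above[OF jk] scalar_prod_self_nonneg[of v] by (simp add: mult_right_mono)
  also have "\<dots> \<le> v \<bullet> (Q j *\<^sub>v v)" by (rule lam_min_le_quad_form[OF Q_sym[OF jl] _ v]) simp
  finally show "0 \<le> v \<bullet> ((Q j - csq j \<cdot>\<^sub>m 1\<^sub>m 4) *\<^sub>v v)"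
    using quad_form_diff[OF Q_carrier[OF jl] _ v] quad_form_smult[of "1\<^sub>m 4" 4 v] v by simp
qed

lemma lam_min_inlier_mat: "lam_min inlier_mat = w \<bullet> (inlier_mat *\<^sub>v w)"
  using inlier_optimal inlier_mat_quad_form w_unit
  by (intro lam_min_eqI[OF sym_inlier_mat]) (auto simp: unit_quat_def)

lemma inlier_mat_eigenvector: "inlier_mat *\<^sub>v w = lam_min inlier_mat \<cdot>\<^sub>v w"
  using lam_min_eigenvector[OF sym_inlier_mat _ w_unit(2)] lam_min_inlier_mat w_unit(3) by simp

lemma lam_min2_inlier_mat_le:
  "u \<in> carrier_vec 4 \<Longrightarrow> u \<bullet> w = 0 \<Longrightarrow> lam_min2 inlier_mat * (u \<bullet> u) \<le> u \<bullet> (inlier_mat *\<^sub>v u)"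
  using lam_min2_le_quad_form[OF sym_inlier_mat _ w_unit(2)] lam_min_inlier_mat w_unit(3) by fastforce


definition zeta_in :: real where
  "zeta_in = lam_min2 inlier_mat / lam_min inlier_mat"

definition d_in :: "nat \<Rightarrow> real" where
  "d_in i = (\<Sum>j = 1..k. w \<bullet> (Q j *\<^sub>v w)) / real k - w \<bullet> (Q i *\<^sub>v w)
     + lam_max (msum4 (\<lambda>j. Q i - Q j) ({1..k} - {i})) / (zeta_in * (real k - 1))"

definition cert_coeff :: real where
  "cert_coeff = 1 / (zeta_in * (real k - 1))"

definition cert_block :: "nat \<Rightarrow> real mat" where
  "cert_block i = orth_proj_mat 4 w *
     (cert_coeff \<cdot>\<^sub>m inlier_mat + (1 - cert_coeff * real k) \<cdot>\<^sub>m Q i - (lam_min inlier_mat / real k) \<cdot>\<^sub>m 1\<^sub>m 4) *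
     orth_proj_mat 4 w"

lemma sym_cert_block: "i \<in> {1..l} \<Longrightarrow> sym_mat 4 (cert_block i)"
  unfolding cert_block_def using w_unit(2)
  by (intro sym_mat_orth_proj_sandwich sym_mat_add sym_mat_minus sym_mat_smult sym_mat_one sym_inlier_mat Q_sym)

lemma cert_block_quad_form:
  assumes i: "i \<in> {1..l}" and v: "v \<in> carrier_vec 4"
  defines "u \<equiv> orth_proj w v"
  shows "v \<bullet> (cert_block i *\<^sub>v v) = cert_coeff * (u \<bullet> (inlier_mat *\<^sub>v u))
    + (1 - cert_coeff * real k) * (u \<bullet> (Q i *\<^sub>v u)) - lam_min inlier_mat / real k * (u \<bullet> u)"
proof -
  have uc: "u \<in> carrier_vec 4" unfolding u_def by (rule orth_proj_carrier[OF w_unit(2) v])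
  have S: "inlier_mat \<in> carrier_mat 4 4" by (rule sym_mat_carrier[OF sym_inlier_mat])
  have "v \<bullet> (cert_block i *\<^sub>v v) = u \<bullet> ((cert_coeff \<cdot>\<^sub>m inlier_mat + (1 - cert_coeff * real k) \<cdot>\<^sub>m Q i
      - (lam_min inlier_mat / real k) \<cdot>\<^sub>m 1\<^sub>m 4) *\<^sub>v u)"
    unfolding cert_block_def u_def using w_unit(2) v
    by (intro quad_form_orth_proj_sandwich sym_mat_add sym_mat_minus sym_mat_smult sym_mat_one sym_inlier_mat Q_sym i)
  then show ?thesis
    using S Q_carrier[OF i] uc
    by (simp add: quad_form_diff[of _ 4] quad_form_add[of _ 4] quad_form_smult[of _ 4])
qed

lemma pairwise_diff_quad_form:
  assumes i: "i \<in> {1..k}" and u: "u \<in> carrier_vec 4"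
  shows "u \<bullet> (msum4 (\<lambda>j. Q i - Q j) ({1..k} - {i}) *\<^sub>v u) = real k * (u \<bullet> (Q i *\<^sub>v u)) - u \<bullet> (inlier_mat *\<^sub>v u)"
proof -
  have Qc: "Q j \<in> carrier_mat 4 4" if "j \<in> {1..k}" for j using Q_carrier inliers_subset that by blast
  have "u \<bullet> (msum4 (\<lambda>j. Q i - Q j) ({1..k} - {i}) *\<^sub>v u) = (\<Sum>j\<in>{1..k} - {i}. u \<bullet> ((Q i - Q j) *\<^sub>v u))"
    using i Qc by (intro msum4_quad_form[OF _ _ u]) (auto simp: minus_carrier_mat)
  also have "\<dots> = (\<Sum>j\<in>{1..k} - {i}. u \<bullet> (Q i *\<^sub>v u) - u \<bullet> (Q j *\<^sub>v u))"
    using i Qc u by (intro sum.cong refl quad_form_diff) auto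
  also have "\<dots> = real (k - 1) * (u \<bullet> (Q i *\<^sub>v u)) - ((\<Sum>j = 1..k. u \<bullet> (Q j *\<^sub>v u)) - u \<bullet> (Q i *\<^sub>v u))"
    using i by (simp add: sum_subtractf sum_diff1)
  finally show ?thesis using k inlier_mat_quad_form[OF u] by (simp add: algebra_simps)
qed


lemma cert_block_total:
  assumes v: "v \<in> carrier_vec 4"
  shows "(\<Sum>i = 1..k. v \<bullet> ((Q i - csq i \<cdot>\<^sub>m 1\<^sub>m 4 - cert_block i) *\<^sub>v v)) =
    (lam_min inlier_mat - (\<Sum>i = 1..k. csq i)) * (v \<bullet> v)"
proof -
  define u where "u = orth_proj w v"
  define t where "t = w \<bullet> v"
  define lam where "lam = lam_min inlier_mat"
  have uc: "u \<in> carrier_vec 4" and uw: "u \<bullet> w = 0"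
    using orth_proj_carrier[OF w_unit(2) v] orth_proj_orthogonal[OF w_unit(2,3) v] by (simp_all add: u_def)
  have S: "inlier_mat \<in> carrier_mat 4 4" by (rule sym_mat_carrier[OF sym_inlier_mat])
  have per: "v \<bullet> ((Q i - csq i \<cdot>\<^sub>m 1\<^sub>m 4 - cert_block i) *\<^sub>v v) = v \<bullet> (Q i *\<^sub>v v) - csq i * (v \<bullet> v)
      - (cert_coeff * (u \<bullet> (inlier_mat *\<^sub>v u)) + (1 - cert_coeff * real k) * (u \<bullet> (Q i *\<^sub>v u)) - lam / real k * (u \<bullet> u))"
    if i: "i \<in> {1..k}" for i
  proof -
    have il: "i \<in> {1..l}" using i inliers_subset by blast
    have Bc: "cert_block i \<in> carrier_mat 4 4" by (rule sym_mat_carrier[OF sym_cert_block[OF il]])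
    show ?thesis
      using cert_block_quad_form[OF il v] Q_carrier[OF il] Bc v
      by (simp add: quad_form_diff[of _ 4] quad_form_smult[of _ 4] minus_carrier_mat u_def lam_def)
  qed
  have "(\<Sum>i = 1..k. v \<bullet> ((Q i - csq i \<cdot>\<^sub>m 1\<^sub>m 4 - cert_block i) *\<^sub>v v)) =
      v \<bullet> (inlier_mat *\<^sub>v v) - (\<Sum>i = 1..k. csq i) * (v \<bullet> v)
      - (real k * cert_coeff * (u \<bullet> (inlier_mat *\<^sub>v u)) + (1 - cert_coeff * real k) * (u \<bullet> (inlier_mat *\<^sub>v u)) - lam * (u \<bullet> u))"
    using k by (simp add: per inlier_mat_quad_form[OF v] inlier_mat_quad_form[OF uc] sum_subtractf
        sum.distrib sum_distrib_left sum_distrib_right mult.assoc)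
  also have "v \<bullet> (inlier_mat *\<^sub>v v) = u \<bullet> (inlier_mat *\<^sub>v u) + t\<^sup>2 * lam"
    using quad_form_orth_proj_decomp[OF sym_inlier_mat w_unit(2) v] inlier_mat_eigenvector uc uw w_unit
    by (simp add: u_def t_def lam_def)
  finally have "(\<Sum>i = 1..k. v \<bullet> ((Q i - csq i \<cdot>\<^sub>m 1\<^sub>m 4 - cert_block i) *\<^sub>v v)) =
      t\<^sup>2 * lam - (\<Sum>i = 1..k. csq i) * (v \<bullet> v) + lam * (u \<bullet> u)"
    by (simp add: algebra_simps)
  moreover have "v \<bullet> v = u \<bullet> u + t\<^sup>2"
    using scalar_prod_orth_proj_decomp[OF w_unit(2,3) v] by (simp add: u_def t_def)
  ultimately show ?thesis by (simp add: lam_def algebra_simps)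
qed

end


locale tls_certificate_setting = tls_inlier_setting +
  assumes zeta_ge: "real k / (real k - 1) \<le> zeta_in"
    and inlier_margin: "\<And>i. i \<in> {1..k} \<Longrightarrow> w \<bullet> (Q i *\<^sub>v w) + vnorm (Q i *\<^sub>v w) + (\<bar>d_in i\<bar> + d_in i) / 2 < csq i"
begin

lemma zeta_pos: "0 < zeta_in"
proof -
  have "0 < real k / (real k - 1)" using k by simp
  then show ?thesis using zeta_ge by linarith
qed

lemma lam_min_inlier_mat_pos: "0 < lam_min inlier_mat"
proof -
  have "0 \<le> w \<bullet> (Q i *\<^sub>v w)" if "i \<in> {1..k}" for i
    using that inliers_subset psdD[OF Q_psd Q_carrier w_unit(2)] by blast
  then have "0 \<le> lam_min inlier_mat"
    unfolding lam_min_inlier_mat inlier_mat_quad_form[OF w_unit(2)] by (rule sum_nonneg)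
  moreover have "lam_min inlier_mat \<noteq> 0" using zeta_pos by (auto simp: zeta_in_def)
  ultimately show ?thesis by simp
qed

lemma lam_min2_inlier_mat: "lam_min2 inlier_mat = zeta_in * lam_min inlier_mat"
  using lam_min_inlier_mat_pos by (simp add: zeta_in_def)

lemma cert_coeff_bounds: "0 \<le> cert_coeff" "cert_coeff * real k \<le> 1" "cert_coeff * zeta_in * (real k - 1) = 1"
proof -
  have pos: "0 < zeta_in * (real k - 1)" using zeta_pos k by simp
  have "real k \<le> zeta_in * (real k - 1)" using zeta_ge k by (simp add: divide_le_eq)
  then show "0 \<le> cert_coeff" "cert_coeff * real k \<le> 1"
    using pos by (simp_all add: cert_coeff_def divide_le_eq)
  have "zeta_in * (real k - 1) \<noteq> 0" using pos by linarith
  then show "cert_coeff * zeta_in * (real k - 1) = 1"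
    by (simp add: cert_coeff_def mult.assoc)
qed

lemma psd_cert_block:
  assumes i: "i \<in> {1..k}"
  shows "psd (cert_block i)"
proof (rule psdI[OF sym_mat_carrier[OF sym_cert_block]])
  show il: "i \<in> {1..l}" using i inliers_subset by blast
  fix v :: "real vec" assume v: "v \<in> carrier_vec 4"
  define u where "u = orth_proj w v"
  define lam where "lam = lam_min inlier_mat"
  have uc: "u \<in> carrier_vec 4" and uw: "u \<bullet> w = 0"
    using orth_proj_carrier[OF w_unit(2) v] orth_proj_orthogonal[OF w_unit(2,3) v] by (simp_all add: u_def)
  have "cert_coeff * (zeta_in * lam * (u \<bullet> u)) \<le> cert_coeff * (u \<bullet> (inlier_mat *\<^sub>v u))"
    using lam_min2_inlier_mat_le[OF uc uw] lam_min2_inlier_mat cert_coeff_bounds(1)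
    by (intro mult_left_mono) (simp_all add: lam_def)
  moreover have "cert_coeff * (zeta_in * lam * (u \<bullet> u)) = lam * (u \<bullet> u) / (real k - 1)"
  proof -
    have "cert_coeff * zeta_in = 1 / (real k - 1)" using cert_coeff_bounds(3) k by (simp add: field_simps)
    then show ?thesis by (simp add: mult.assoc[symmetric])
  qed
  moreover have "lam * (u \<bullet> u) / real k \<le> lam * (u \<bullet> u) / (real k - 1)"
    using k lam_min_inlier_mat_pos scalar_prod_self_nonneg[of u]
    by (intro divide_left_mono) (simp_all add: lam_def)
  moreover have "0 \<le> (1 - cert_coeff * real k) * (u \<bullet> (Q i *\<^sub>v u))"
    using cert_coeff_bounds(2) psdD[OF Q_psd[OF il] Q_carrier[OF il] uc] by simp
  ultimately show "0 \<le> v \<bullet> (cert_block i *\<^sub>v v)"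
    unfolding cert_block_quad_form[OF il v] u_def[symmetric] lam_def[symmetric] by simp
qed


lemma psd_cert_block_minus:
  assumes i: "i \<in> {1..k}"
  shows "psd (cert_block i - (Q i - csq i \<cdot>\<^sub>m 1\<^sub>m 4))"
proof (rule psdI)
  have il: "i \<in> {1..l}" using i inliers_subset by blast
  have Qc: "Q i \<in> carrier_mat 4 4" by (rule Q_carrier[OF il])
  have Ac: "Q i - csq i \<cdot>\<^sub>m 1\<^sub>m 4 \<in> carrier_mat 4 4" by (simp add: minus_carrier_mat)
  have Bc: "cert_block i \<in> carrier_mat 4 4" by (rule sym_mat_carrier[OF sym_cert_block[OF il]])
  show "cert_block i - (Q i - csq i \<cdot>\<^sub>m 1\<^sub>m 4) \<in> carrier_mat 4 4" using Ac by (simp add: minus_carrier_mat)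
  fix v :: "real vec" assume v: "v \<in> carrier_vec 4"
  define u t where "u = orth_proj w v" and "t = w \<bullet> v"
  define M where "M = msum4 (\<lambda>j. Q i - Q j) ({1..k} - {i})"
  have uc: "u \<in> carrier_vec 4" unfolding u_def by (rule orth_proj_carrier[OF w_unit(2) v])
  have Qw: "Q i *\<^sub>v w \<in> carrier_vec 4" using Qc w_unit(2) by simp
  have "sym_mat 4 M"
    unfolding M_def using Q_sym inliers_subset i by (intro sym_mat_msum4 sym_mat_minus) auto
  then have L: "real k * (u \<bullet> (Q i *\<^sub>v u)) - u \<bullet> (inlier_mat *\<^sub>v u) \<le> lam_max M * (vnorm u)\<^sup>2"
    using quad_form_le_lam_max[of 4 M u] uc pairwise_diff_quad_form[OF i uc, folded M_def]
    by (simp add: vnorm_square)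
  have d: "d_in i = lam_min inlier_mat / real k - w \<bullet> (Q i *\<^sub>v w) + cert_coeff * lam_max M"
    using inlier_mat_quad_form[OF w_unit(2)] by (simp add: d_in_def cert_coeff_def M_def lam_min_inlier_mat)
  have "v \<bullet> ((Q i - csq i \<cdot>\<^sub>m 1\<^sub>m 4) *\<^sub>v v) =
      u \<bullet> (Q i *\<^sub>v u) + 2 * t * (u \<bullet> (Q i *\<^sub>v w)) + t\<^sup>2 * (w \<bullet> (Q i *\<^sub>v w)) - csq i * ((vnorm u)\<^sup>2 + t\<^sup>2)"
    using quad_form_orth_proj_decomp[OF Q_sym[OF il] w_unit(2) v] scalar_prod_orth_proj_decomp[OF w_unit(2,3) v]
      quad_form_diff[OF Qc _ v] quad_form_smult[of "1\<^sub>m 4" 4 v] v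
    by (simp add: u_def t_def vnorm_square)
  also have "\<dots> \<le> cert_coeff * (u \<bullet> (inlier_mat *\<^sub>v u)) + (1 - cert_coeff * real k) * (u \<bullet> (Q i *\<^sub>v u))
      - lam_min inlier_mat / real k * (vnorm u)\<^sup>2"
    using k by (intro certificate_margin[OF vnorm_nonneg vnorm_nonneg abs_scalar_prod_le_vnorm[OF uc Qw]
          cert_coeff_bounds(1) L _ d inlier_margin[OF i]]) simp
  also have "\<dots> = v \<bullet> (cert_block i *\<^sub>v v)"
    using cert_block_quad_form[OF il v] by (simp add: u_def vnorm_square)
  finally show "0 \<le> v \<bullet> ((cert_block i - (Q i - csq i \<cdot>\<^sub>m 1\<^sub>m 4)) *\<^sub>v v)"
    using quad_form_diff[OF Bc Ac v] by simp
qed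


theorem sdr_tight: "sdr_tight l Q csq"
proof (rule sdr_tightI[OF qcqp_feasible_quat_lift[OF w_unit(1)]])
  fix W assume W: "sdr_feasible l W"
  have "lam_min inlier_mat - (\<Sum>i = 1..k. csq i) + (\<Sum>i = 1..l. csq i) \<le> relax_obj l Q csq W"
    using inliers_subset
    by (intro sdr_dual_certificate[OF inliers_subset Q_sym psd_outlier_shift _ psd_cert_block
          psd_cert_block_minus cert_block_total W] sym_cert_block) auto
  moreover have "relax_obj l Q csq (outer (quat_lift l {1..k} w)) =
      (\<Sum>i = 1..k. w \<bullet> (Q i *\<^sub>v w)) + (\<Sum>i\<in>{1..l} - {1..k}. csq i)"
    using Q_carrier inliers_subset by (intro relax_obj_quat_lift[OF w_unit(1) inliers_subset]) auto
  moreover have "(\<Sum>i = 1..l. csq i) = (\<Sum>i = 1..k. csq i) + (\<Sum>i\<in>{1..l} - {1..k}. csq i)"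
    using sum.subset_diff[OF inliers_subset, of csq] by simp
  ultimately show "relax_obj l Q csq (outer (quat_lift l {1..k} w)) \<le> relax_obj l Q csq W"
    using lam_min_inlier_mat inlier_mat_quad_form[OF w_unit(2)] by simp
qed

end

theorem theorem3p9:
  fixes l ks :: nat
    and x y eps :: "nat \<Rightarrow> real vec"
    and csq :: "nat \<Rightarrow> real"
    and R0 :: "real mat" and w0s w0h :: "real vec"
  defines "Q \<equiv> (\<lambda>i. Qmat (y i) (x i))"
      and "P \<equiv> (\<lambda>i. Pmat R0 (x i))"
  defines "S \<equiv> msum4 Q {1..ks}"
  defines "zeta \<equiv> lam_min2 S / lam_min S"
  defines "d \<equiv> (\<lambda>i. (\<Sum>k=1..ks. w0h \<bullet> (Q k *\<^sub>v w0h)) / real ks - w0h \<bullet> (Q i *\<^sub>v w0h)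
                    + lam_max (msum4 (\<lambda>j. Q i - Q j) ({1..ks} - {i})) / (zeta * (real ks - 1)))"
  assumes R0: "R0 \<in> SO3" and w0s: "unit_quat w0s" "rotR w0s = R0"
    and ks: "2 \<le> ks" "ks \<le> l"
    and xy: "\<forall>i\<in>{1..l}. x i \<in> carrier_vec 3 \<and> y i \<in> carrier_vec 3"
    and inl: "\<forall>i\<in>{1..ks}. eps i \<in> carrier_vec 3 \<and> y i = R0 *\<^sub>v x i + eps i"
    and c_nonneg: "\<forall>i\<in>{1..l}. 0 \<le> csq i"
    and w0h: "tls_global_min l Q csq w0h"
    and A1: "zeta \<ge> real ks / (real ks - 1)"
    and A2: "\<forall>j\<in>{ks+1..l}. 0 < csq j \<and> csq j < lam_min (Q j)"
    and A3: "\<forall>i\<in>{1..ks}. csq i > w0h \<bullet> (Q i *\<^sub>v w0h) + vnorm (Q i *\<^sub>v w0h) + (\<bar>d i\<bar> + d i) / 2"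
  shows "sdr_tight l Q csq \<and>
         (lam_min2 (msum4 P {1..ks}) > 0 \<longrightarrow>
          1 - (w0h \<bullet> w0s)\<^sup>2 \<le> 4 * (\<Sum>i=1..ks. vnorm (eps i) * vnorm (x i)) / lam_min2 (msum4 P {1..ks}))"
proof -
  have margin: "w0h \<bullet> (Q i *\<^sub>v w0h) < csq i" if "i \<in> {1..ks}" for i
  proof -
    have "0 \<le> (\<bar>d i\<bar> + d i) / 2" by simp
    then show ?thesis using bspec[OF A3 that] vnorm_nonneg[of "Q i *\<^sub>v w0h"] by linarith
  qed
  interpret tls_inlier_setting l ks Q csq w0h
    using xy ks w0h A2 margin by unfold_locales (auto simp: Q_def sym_mat_Qmat psd_Qmat)
  interpret tls_certificate_setting l ks Q csq w0h
    using A1 A3 by unfold_locales (simp_all add: zeta_in_def d_in_def inlier_mat_def zeta_def S_def d_def)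
  have opt: "(\<Sum>i = 1..ks. w0h \<bullet> (Qmat (y i) (x i) *\<^sub>v w0h)) \<le> (\<Sum>i = 1..ks. w0s \<bullet> (Qmat (y i) (x i) *\<^sub>v w0s))"
    using inlier_optimal[OF w0s(1)] by (simp add: Q_def)
  have data: "x i \<in> carrier_vec 3 \<and> eps i \<in> carrier_vec 3 \<and> y i = rotR w0s *\<^sub>v x i + eps i"
    if "i \<in> {1..ks}" for i
    using xy inl ks that w0s(2) by auto
  have "1 - (w0h \<bullet> w0s)\<^sup>2 \<le> 4 * (\<Sum>i=1..ks. vnorm (eps i) * vnorm (x i)) / lam_min2 (msum4 P {1..ks})"
    if "lam_min2 (msum4 P {1..ks}) > 0"
    using rotation_error_bound[OF w0s(1) w_unit(1) finite_atLeastAtMost data opt] that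
    by (simp add: P_def w0s(2))
  then show ?thesis using sdr_tight by blast
qed

end
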